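(* For every continuous $c:\mathcal{N}\to[0;1]$ there is a continuous function $\mathcal{F}_c:\mathrm{PrTr}_2\to\mathbf{K}$ such that for every $T\in\mathrm{PrTr}_2$, the compact set $\mathcal{F}_c(T)$ is the closed offspring of $T$ determined by some compliant family $(D_t)_{t\in T}$, and for every $x\in[T]$ one has $x\in\mathcal{N}\iff\mathcal{O}_{\mathcal{F}_c(T)}(\overline{x})=0$; moreover for $x\in[T]\cap\mathcal{N}$, $\mathcal{D}_{\mathcal{F}_c(T)}(\overline{x})=c(x)$.
   Context: $2^{\omega}$ is the Cantor space; $N_s=\{x\in2^\omega:s\subset x\}$; $\mu$ is the coin-tossing measure, $\mu(N_s)=2^{-\mathrm{lh}(s)}$. For measurable $A$, $\mathcal{D}_A(z)=\lim_n\mu(A\cap N_{z\restriction n})/\mu(N_{z\restriction n})$ when it exists, and $\mathcal{O}_A(z)=\limsup_n-\liminf_n$ of those ratios (the oscillation). $A$ is dualistic if $\mathcal{D}_A(z)$ exists and lies in $\{0,1\}$ for all $z$. $\mathcal{N}=\{y\in2^\omega:y(n)=1\text{ for infinitely many }n\}$. $\mathrm{PrTr}_2$ is the set of pruned trees on $\{0,1\}$ (nonempty sets of finite binary sequences closed under initial segments, every node having a proper extension), viewed as a subspace of $2^{(2^{<\omega})}\cong2^\omega$ (a $G_\delta$, hence Polish); $[T]$ is the set of branches. $\mathbf{K}$ is the Polish space of compact subsets of $2^\omega$ with the Vietoris topology. The stretch of $s\in2^{\le\omega}$ is $\overline{s}=s(0)^{(1)}{}^\frown s(1)^{(2)}{}^\frown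 s(2)^{(3)}\cdots$ ($s(j)$ repeated $j+1$ times). $\mathrm{Fl}(n)=2^{n+1}\setminus\{0^{(n+1)},1^{(n+1)}\}$. A family $(D_t)_{t\in T}$ is compliant if each $D_t$ is dualistic, $\emptyset\ne D_t\ne2^\omega$, and $\mu(\operatorname{Int}D_t)=\mu(\operatorname{Cl}D_t)$; its closed offspring is $\overline{[T]}\cup\bigcup\{\overline{t}^\frown a^\frown\operatorname{Cl}D_t:t\in T,\ a\in\mathrm{Fl}(\mathrm{lh}\,t)\}$, where $\overline{[T]}=\{\overline{x}:x\in[T]\}$. *)

theory Defs
  imports "HOL-Probability.Probability"
begin

type_synonym cantor = "nat \<Rightarrow> bool"

definition cantor_top :: "cantor topology" where
  "cantor_top = product_topology (\<lambda>_. discrete_topology UNIV) UNIV"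

definition restr :: "cantor \<Rightarrow> nat \<Rightarrow> bool list" where
  "restr z n = map z [0..<n]"

definition Nbhd :: "bool list \<Rightarrow> cantor set" where
  "Nbhd s = {x. restr x (length s) = s}"

definition mu :: "cantor measure" where
  "mu = PiM UNIV (\<lambda>_::nat. measure_pmf (pmf_of_set (UNIV :: bool set)))"

text \<open>Measurable = Lebesgue measurable, i.e. in the completion of mu.\<close>
definition ratio :: "cantor set \<Rightarrow> cantor \<Rightarrow> nat \<Rightarrow> real" where
  "ratio A z n = measure (completion mu) (A \<inter> Nbhd (restr z n)) / measure (completion mu) (Nbhd (restr z n))"

definition has_density :: "cantor set \<Rightarrow> cantor \<Rightarrow> real \<Rightarrow> bool" where
  "has_density A z d \<longleftrightarrow> (ratio A z \<longlonglongrightarrow> d)"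

definition oscillation :: "cantor set \<Rightarrow> cantor \<Rightarrow> ereal" where
  "oscillation A z = limsup (\<lambda>n. ereal (ratio A z n)) - liminf (\<lambda>n. ereal (ratio A z n))"

definition dualistic :: "cantor set \<Rightarrow> bool" where
  "dualistic A \<longleftrightarrow> A \<in> sets (completion mu) \<and> (\<forall>z. has_density A z 0 \<or> has_density A z 1)"

definition Ncal :: "cantor set" where
  "Ncal = {y. infinite {n. y n}}"

definition PrTr2 :: "bool list set set" where
  "PrTr2 = {T. T \<noteq> {} \<and> (\<forall>s\<in>T. \<forall>n. take n s \<in> T) \<and> (\<forall>s\<in>T. \<exists>u\<in>T. length s < length u \<and> take (length s) u = s)}"

text \<open>Topology on sets of finite sequences = product topology on 2^(2^{<omega}).\<close>
definition tree_top :: "bool list set topology" where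
  "tree_top = topology_generated_by (range (\<lambda>s. {T. s \<in> T}) \<union> range (\<lambda>s. {T. s \<notin> T}))"

definition branches :: "bool list set \<Rightarrow> cantor set" where
  "branches T = {x. \<forall>n. restr x n \<in> T}"

definition vietoris :: "cantor set topology" where
  "vietoris = subtopology
     (topology_generated_by ({{K. K \<subseteq> U} | U. openin cantor_top U} \<union> {{K. K \<inter> U \<noteq> {}} | U. openin cantor_top U}))
     {K. compactin cantor_top K}"

text \<open>Stretch of finite and infinite sequences: s(j) repeated j+1 times.\<close>
definition stretch_list :: "bool list \<Rightarrow> bool list" where
  "stretch_list s = concat (map (\<lambda>j. replicate (j+1) (s ! j)) [0..<length s])"

definition stretch :: "cantor \<Rightarrow> cantor" where
  "stretch x n = x (LEAST k. n < (k+1)*(k+2) div 2)"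

definition Fl :: "nat \<Rightarrow> bool list set" where
  "Fl n = {a. length a = n+1 \<and> a \<noteq> replicate (n+1) False \<and> a \<noteq> replicate (n+1) True}"

definition cat :: "bool list \<Rightarrow> cantor \<Rightarrow> cantor" where
  "cat u x n = (if n < length u then u ! n else x (n - length u))"

definition compliant :: "bool list set \<Rightarrow> (bool list \<Rightarrow> cantor set) \<Rightarrow> bool" where
  "compliant T D \<longleftrightarrow> (\<forall>t\<in>T. dualistic (D t) \<and> D t \<noteq> {} \<and> D t \<noteq> UNIV \<and>
      measure mu (cantor_top interior_of (D t)) = measure mu (cantor_top closure_of (D t)))"

definition closed_offspring :: "bool list set \<Rightarrow> (bool list \<Rightarrow> cantor set) \<Rightarrow> cantor set" where
  "closed_offspring T D = stretch ` branches T \<union>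
     (\<Union>t\<in>T. \<Union>a\<in>Fl (length t). cat (stretch_list t @ a) ` (cantor_top closure_of (D t)))"

end

theory Submission
  imports Defs
begin

text \<open>
  For a pruned tree T take as D t a clopen cylinder whose measure m t is a grid approximation,
  with step 1/K t where K t = 2 ^ (number of ones in t + 2), of the value of c at t 1 1 1 ...,
  shifted by one or three quarters of a step according to the parity of the length of t.
  Along a stretched branch the relative measure of the offspring in the neighbourhoods of
  the stretched point is, inside the n-th block, a convex combination of m (x|n) and of its value
  at the start of the next block, which is within 2^-n of m (x|(n+1)).
  If x has infinitely many ones, K grows, and continuity of c gives m (x|n) \<rightarrow> c x, so the
  density is c x. If x has finitely many ones, K is eventually constant and the alternating
  shift keeps consecutive masses at least 1/(2K) apart, so the ratios oscillate.
  Continuity in T holds because each level of resolution of the offspring only depends on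
  finitely many nodes of T.
\<close>

subsection \<open>Triangular numbers\<close>

fun tri :: "nat \<Rightarrow> nat" where
  "tri 0 = 0"
| "tri (Suc n) = tri n + Suc n"

lemma strict_mono_tri: "strict_mono tri"
  by (rule strict_mono_Suc_iff[THEN iffD2]) simp

lemma tri_mono: "m \<le> n \<Longrightarrow> tri m \<le> tri n"
  using strict_mono_tri by (simp add: strict_mono_less_eq)

lemma tri_less_iff: "tri m < tri n \<longleftrightarrow> m < n"
  using strict_mono_tri by (simp add: strict_mono_less)

lemma tri_eq_iff: "tri m = tri n \<longleftrightarrow> m = n"
  using strict_mono_tri by (simp add: strict_mono_eq)

lemma tri_ge: "n \<le> tri n"
  by (induction n) auto

lemma tri_eq_div: "tri n = n * (n + 1) div 2"
  by (induction n) (auto simp: algebra_simps)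

lemma tri_decomp: "\<exists>n k. N = tri n + k \<and> k \<le> n"
proof (induction N)
  case 0
  show ?case by (rule exI[of _ 0]) simp
next
  case (Suc N)
  then obtain n k where N: "N = tri n + k" "k \<le> n" by blast
  show ?case
  proof (cases "k = n")
    case True
    with N have "Suc N = tri (Suc n) + 0" by simp
    then show ?thesis by blast
  next
    case False
    with N have "Suc N = tri n + Suc k" "Suc k \<le> n" by simp_all
    then show ?thesis by blast
  qed
qed

lemma tri_decomp_ge: "tri n0 \<le> tri n + k \<Longrightarrow> k \<le> n \<Longrightarrow> n0 \<le> n"
proof (rule ccontr)
  assume "tri n0 \<le> tri n + k" "k \<le> n" "\<not> n0 \<le> n"
  then show False using tri_mono[of "Suc n" n0] by simp
qed

subsection \<open>Restrictions and concatenation\<close>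

lemma length_restr [simp]: "length (restr z n) = n"
  by (simp add: restr_def)

lemma nth_restr [simp]: "i < n \<Longrightarrow> restr z n ! i = z i"
  by (simp add: restr_def)

lemma restr_Suc: "restr z (Suc n) = restr z n @ [z n]"
  by (simp add: restr_def)

lemma restr_add: "restr z (a + b) = restr z a @ map z [a..<a+b]"
proof -
  have "[0..<a + b] = [0..<a] @ [a..<a+b]" by (rule upt_add_eq_append) simp
  then show ?thesis by (simp add: restr_def)
qed

lemma take_restr: "m \<le> n \<Longrightarrow> take m (restr z n) = restr z m"
  by (simp add: restr_def take_map)

lemma restr_eq_iff: "restr z n = restr w n \<longleftrightarrow> (\<forall>i<n. z i = w i)"
  by (auto simp: restr_def)

lemma restr_eq_list_iff: "restr z (length s) = s \<longleftrightarrow> (\<forall>i<length s. z i = s ! i)"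
proof
  assume "\<forall>i<length s. z i = s ! i"
  then show "restr z (length s) = s" by (intro nth_equalityI) auto
next
  assume a: "restr z (length s) = s"
  show "\<forall>i<length s. z i = s ! i"
  proof (intro allI impI)
    fix i assume "i < length s"
    then show "z i = s ! i" using nth_restr[of i "length s" z] a by simp
  qed
qed

lemma restr_cat: "restr (cat u z) (length u + k) = u @ restr z k"
  by (rule nth_equalityI) (auto simp: cat_def nth_append)

lemma restr_cat_length [simp]: "restr (cat u z) (length u) = u"
  using restr_cat[of u z 0] by (simp add: restr_def)

lemma restr_cat_le: "n \<le> length u \<Longrightarrow> restr (cat u z) n = take n u"
  by (rule nth_equalityI) (auto simp: cat_def)

lemma cat_restr_shift: "restr w (length u) = u \<Longrightarrow> w = cat u (\<lambda>i. w (length u + i))"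
  unfolding restr_eq_list_iff by (auto simp: cat_def fun_eq_iff)

lemma mem_Nbhd: "z \<in> Nbhd s \<longleftrightarrow> restr z (length s) = s"
  by (simp add: Nbhd_def)

lemma Nbhd_restr_subset: "restr y (length s) = s \<Longrightarrow> length s \<le> N \<Longrightarrow> Nbhd (restr y N) \<subseteq> Nbhd s"
proof
  fix x assume a: "restr y (length s) = s" "length s \<le> N" "x \<in> Nbhd (restr y N)"
  then have "\<forall>i<N. x i = y i" by (simp add: mem_Nbhd restr_eq_iff)
  then have "restr x (length s) = restr y (length s)" using a(2) by (simp add: restr_eq_iff)
  then show "x \<in> Nbhd s" using a(1) by (simp add: mem_Nbhd)
qed

subsection \<open>Stretching\<close>

lemma length_stretch_list [simp]: "length (stretch_list s) = tri (length s)"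
proof -
  have "(\<Sum>j<n. j + 1) = tri n" for n
    by (induction n) auto
  then show ?thesis
    by (simp add: stretch_list_def length_concat sum_list_sum_nth atLeast0LessThan o_def)
qed

lemma stretch_list_Nil [simp]: "stretch_list [] = []"
  by (simp add: stretch_list_def)

lemma stretch_list_snoc: "stretch_list (s @ [b]) = stretch_list s @ replicate (length s + 1) b"
proof -
  have "map (\<lambda>j. replicate (j+1) ((s @ [b]) ! j)) [0..<length s] = map (\<lambda>j. replicate (j+1) (s ! j)) [0..<length s]"
    by (rule map_cong) (auto simp: nth_append)
  then show ?thesis unfolding stretch_list_def
    by (simp only: length_append_singleton upt_Suc_append[OF le0] map_append concat_append) simp
qed

lemma stretch_list_take: "m \<le> length s \<Longrightarrow> take (tri m) (stretch_list s) = stretch_list (take m s)"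
proof (induction s rule: rev_induct)
  case (snoc b s)
  show ?case
  proof (cases "m \<le> length s")
    case True
    then have "tri m \<le> length (stretch_list s)" by (simp add: tri_mono)
    then show ?thesis using True snoc by (simp add: stretch_list_snoc)
  next
    case False
    with snoc.prems have "m = length s + 1" by simp
    then show ?thesis by (simp add: stretch_list_snoc)
  qed
qed simp

lemma length_stretch_list_eq:
  assumes "stretch_list s = stretch_list s'"
  shows "length s = length s'"
proof -
  have "tri (length s) = tri (length s')" using arg_cong[where f = length, OF assms] by simp
  then show ?thesis by (simp add: tri_eq_iff)
qed

lemma inj_stretch_list: "inj stretch_list"
proof (rule injI)
  fix s s' :: "bool list"
  assume "stretch_list s = stretch_list s'"
  then show "s = s'"
  proof (induction s arbitrary: s' rule: rev_induct)
    case Nil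
    from length_stretch_list_eq[OF Nil] show ?case by simp
  next
    case (snoc b s)
    have "length s' = Suc (length s)" using length_stretch_list_eq[OF snoc.prems] by simp
    then obtain s'' b' where s': "s' = s'' @ [b']" "length s'' = length s"
      by (metis length_Suc_conv_rev)
    with snoc.prems have "stretch_list s @ replicate (length s + 1) b = stretch_list s'' @ replicate (length s + 1) b'"
      by (simp add: stretch_list_snoc)
    then have "stretch_list s = stretch_list s''" "b = b'"
      using s'(2) by (auto simp: append_eq_append_conv)
    with snoc.IH s' show ?case by simp
  qed
qed

lemma stretch_block: "tri n \<le> i \<Longrightarrow> i < tri (Suc n) \<Longrightarrow> stretch x i = x n"
proof -
  assume i: "tri n \<le> i" "i < tri (Suc n)"
  have e: "(k + 1) * (k + 2) div 2 = tri (Suc k)" for k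
    using tri_eq_div[of "Suc k"] by (simp add: algebra_simps)
  have "(LEAST k. i < (k + 1) * (k + 2) div 2) = n"
    unfolding e
  proof (rule Least_equality)
    fix k assume "i < tri (Suc k)"
    with i(1) have "tri n < tri (Suc k)" by linarith
    then have "n < Suc k" by (simp only: tri_less_iff)
    then show "n \<le> k" by simp
  qed (fact i(2))
  then show ?thesis by (simp add: stretch_def)
qed

lemma restr_stretch_tri: "restr (stretch x) (tri n) = stretch_list (restr x n)"
proof (induction n)
  case (Suc n)
  have "map (stretch x) [tri n..<tri n + Suc n] = replicate (Suc n) (x n)"
    by (rule nth_equalityI) (simp_all del: upt_Suc replicate.simps add: stretch_block)
  with Suc show ?case
    by (simp only: tri.simps(2) restr_add restr_Suc stretch_list_snoc length_restr) simp
qed (simp add: restr_def)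

lemma restr_stretch_block:
  "k \<le> Suc n \<Longrightarrow> restr (stretch x) (tri n + k) = stretch_list (restr x n) @ replicate k (x n)"
proof -
  assume "k \<le> Suc n"
  then have "map (stretch x) [tri n..<tri n + k] = replicate k (x n)"
    by (intro nth_equalityI) (simp_all del: upt_Suc add: stretch_block)
  then show ?thesis by (simp add: restr_add restr_stretch_tri del: upt_Suc)
qed

lemma restr_stretch_eq: "restr x N = restr x' N \<Longrightarrow> restr (stretch x) N = restr (stretch x') N"
proof (unfold restr_eq_iff, intro allI impI)
  fix j assume x: "\<forall>i<N. x i = x' i" and "j < N"
  obtain n k where j: "j = tri n + k" "k \<le> n" using tri_decomp by blast
  then have "tri n \<le> j" "j < tri (Suc n)" by simp_all
  then have "stretch x j = x n" "stretch x' j = x' n" by (simp_all only: stretch_block)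
  moreover have "n < N" using j \<open>j < N\<close> tri_ge[of n] by linarith
  ultimately show "stretch x j = stretch x' j" using x by auto
qed

lemma eq_stretchI:
  assumes "\<And>n i. i \<le> n \<Longrightarrow> y (tri n + i) = y (tri n)"
  shows "y = stretch (\<lambda>n. y (tri n))"
proof
  fix j
  obtain n i where j: "j = tri n + i" "i \<le> n" using tri_decomp by blast
  moreover have "stretch (\<lambda>n. y (tri n)) j = y (tri n)" using j by (intro stretch_block) auto
  ultimately show "y j = stretch (\<lambda>n. y (tri n)) j" using assms by simp
qed

subsection \<open>The topology of Cantor space\<close>

lemma topspace_cantor_top [simp]: "topspace cantor_top = UNIV"
  by (simp add: cantor_top_def)

lemma compact_space_cantor_top: "compact_space cantor_top"
  unfolding cantor_top_def
  by (rule compact_space_product_topology[THEN iffD2], rule disjI2) (simp add: compact_space_discrete_topology)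

lemma Nbhd_PiE: "Nbhd s = Pi\<^sub>E UNIV (\<lambda>i. if i < length s then {s!i} else UNIV)"
  by (auto simp: mem_Nbhd restr_eq_list_iff PiE_def Pi_def)

lemma openin_Nbhd: "openin cantor_top (Nbhd s)"
proof -
  have "finite {i. (if i < length s then {s!i} else UNIV) \<noteq> (UNIV::bool set)}"
    by (rule finite_subset[of _ "{..<length s}"]) auto
  then show ?thesis
    unfolding cantor_top_def Nbhd_PiE by (intro product_topology_basis) simp_all
qed

lemma openin_cantor_top_Nbhd:
  assumes "openin cantor_top U" "z \<in> U"
  shows "\<exists>n. Nbhd (restr z n) \<subseteq> U"
proof -
  have "openin (product_topology (\<lambda>_. discrete_topology (UNIV::bool set)) UNIV) U"
    using assms(1) by (simp add: cantor_top_def)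
  then obtain V where V: "finite {i. V i \<noteq> (UNIV::bool set)}" "z \<in> Pi\<^sub>E UNIV V" "Pi\<^sub>E UNIV V \<subseteq> U"
    using assms(2) unfolding openin_product_topology_alt by (force simp del: PiE_UNIV_domain)
  obtain n where n: "{i. V i \<noteq> UNIV} \<subseteq> {..<n}"
    using finite_nat_bounded[OF V(1)] by blast
  have "Nbhd (restr z n) \<subseteq> Pi\<^sub>E UNIV V"
  proof
    fix y assume "y \<in> Nbhd (restr z n)"
    then have yz: "\<And>i. i < n \<Longrightarrow> y i = z i" by (simp add: mem_Nbhd restr_eq_iff)
    have "y i \<in> V i" for i
    proof (cases "i < n")
      case True
      then show ?thesis using yz[OF True] PiE_mem[OF V(2), of i] by simp
    next
      case False
      then have "V i = UNIV" using n by auto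
      then show ?thesis by simp
    qed
    then show "y \<in> Pi\<^sub>E UNIV V" by (simp add: PiE_def Pi_def)
  qed
  with V(3) show ?thesis by blast
qed

lemma openin_cantor_top_iff: "openin cantor_top U \<longleftrightarrow> (\<forall>z\<in>U. \<exists>n. Nbhd (restr z n) \<subseteq> U)"
proof
  assume a: "\<forall>z\<in>U. \<exists>n. Nbhd (restr z n) \<subseteq> U"
  show "openin cantor_top U"
  proof (subst openin_subopen, intro ballI)
    fix z assume "z \<in> U"
    then obtain n where "Nbhd (restr z n) \<subseteq> U" using a by blast
    moreover have "z \<in> Nbhd (restr z n)" by (simp add: mem_Nbhd)
    ultimately show "\<exists>T. openin cantor_top T \<and> z \<in> T \<and> T \<subseteq> U" using openin_Nbhd by blast
  qed
qed (use openin_cantor_top_Nbhd in blast)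

lemma closedin_cantor_top_iff:
  "closedin cantor_top A \<longleftrightarrow> (\<forall>y. (\<forall>N. \<exists>w\<in>A. restr w N = restr y N) \<longrightarrow> y \<in> A)"
proof -
  have "closedin cantor_top A \<longleftrightarrow> (\<forall>y\<in>-A. \<exists>N. Nbhd (restr y N) \<subseteq> -A)"
    by (simp add: closedin_def Compl_eq_Diff_UNIV openin_cantor_top_iff)
  also have "\<dots> \<longleftrightarrow> (\<forall>y\<in>-A. \<exists>N. \<not> (\<exists>w\<in>A. restr w N = restr y N))"
    by (simp add: mem_Nbhd subset_iff) blast
  finally show ?thesis by blast
qed

lemma compactin_uniform_Nbhd:
  assumes K: "compactin cantor_top K" and U: "openin cantor_top U" and KU: "K \<subseteq> U"
  shows "\<exists>N. \<forall>y\<in>K. Nbhd (restr y N) \<subseteq> U"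
proof -
  let ?A = "{s. Nbhd s \<subseteq> U}"
  have cov: "K \<subseteq> \<Union> (Nbhd ` ?A)"
  proof
    fix y assume "y \<in> K"
    then obtain n where "Nbhd (restr y n) \<subseteq> U" using openin_cantor_top_Nbhd[OF U] KU by blast
    moreover have "y \<in> Nbhd (restr y n)" by (simp add: mem_Nbhd)
    ultimately show "y \<in> \<Union> (Nbhd ` ?A)" by blast
  qed
  have "\<forall>V\<in>Nbhd ` ?A. openin cantor_top V" using openin_Nbhd by blast
  then obtain \<F> where F: "finite \<F>" "\<F> \<subseteq> Nbhd ` ?A" "K \<subseteq> \<Union>\<F>"
    using K cov unfolding compactin_def by meson
  obtain C where C: "C \<subseteq> ?A" "finite C" "\<F> = Nbhd ` C"
    using finite_subset_image[OF F(1) F(2)] by blast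
  obtain N where N: "length ` C \<subseteq> {..<N}" using finite_nat_bounded[of "length ` C"] C(2) by blast
  have "Nbhd (restr y N) \<subseteq> U" if y: "y \<in> K" for y
  proof -
    obtain s where s: "s \<in> C" "y \<in> Nbhd s" using F(3) C(3) y by blast
    have "length s \<le> N" using N s(1) by auto
    then have "Nbhd (restr y N) \<subseteq> Nbhd s" using s(2) by (intro Nbhd_restr_subset) (simp_all add: mem_Nbhd)
    then show ?thesis using C(1) s(1) by blast
  qed
  then show ?thesis by blast
qed

subsection \<open>Offspring of a tree\<close>

definition offspring :: "bool list set \<Rightarrow> (bool list \<Rightarrow> cantor set) \<Rightarrow> cantor set" where
  "offspring T D = stretch ` branches T \<union>
     (\<Union>t\<in>T. \<Union>a\<in>Fl (length t). cat (stretch_list t @ a) ` D t)"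

lemma closed_offspring_eq_offspring: "closed_offspring T D = offspring T (\<lambda>t. cantor_top closure_of D t)"
  by (simp add: closed_offspring_def offspring_def)

lemma offspringE:
  assumes "w \<in> offspring T D"
  obtains (branch) x where "x \<in> branches T" "w = stretch x"
  | (piece) t a z where "t \<in> T" "a \<in> Fl (length t)" "z \<in> D t" "w = cat (stretch_list t @ a) z"
  using assms unfolding offspring_def by blast

lemma stretch_in_offspring: "x \<in> branches T \<Longrightarrow> stretch x \<in> offspring T D"
  by (simp add: offspring_def)

lemma cat_in_offspring:
  "t \<in> T \<Longrightarrow> a \<in> Fl (length t) \<Longrightarrow> z \<in> D t \<Longrightarrow> cat (stretch_list t @ a) z \<in> offspring T D"
  unfolding offspring_def by blast

lemma length_Fl: "a \<in> Fl n \<Longrightarrow> length a = Suc n"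
  by (simp add: Fl_def)

lemma Fl_neq_replicate: "a \<in> Fl n \<Longrightarrow> a \<noteq> replicate (Suc n) b"
  by (cases b) (auto simp: Fl_def)

lemma stretch_list_neq_Fl:
  assumes "a \<in> Fl (length t)" "length s = Suc (length t)"
  shows "stretch_list s \<noteq> stretch_list t @ a"
proof
  assume eq: "stretch_list s = stretch_list t @ a"
  obtain s' b where s: "s = s' @ [b]" "length s' = length t"
    using assms(2) by (metis length_Suc_conv_rev)
  have "stretch_list s' @ replicate (Suc (length t)) b = stretch_list t @ a"
    using eq s by (simp add: stretch_list_snoc)
  then have "a = replicate (Suc (length t)) b"
    using s(2) by (simp add: append_eq_append_conv)
  with Fl_neq_replicate[OF assms(1)] show False by blast
qed

lemma restr_tri_take:
  assumes "restr w (tri (length s)) = stretch_list s" "k \<le> length s"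
  shows "restr w (tri k) = stretch_list (take k s)"
proof -
  have "restr w (tri k) = take (tri k) (restr w (tri (length s)))"
    using assms(2) by (simp add: take_restr tri_mono)
  also have "\<dots> = stretch_list (take k s)"
    using assms by (simp add: stretch_list_take)
  finally show ?thesis .
qed

lemma restr_cat_piece:
  assumes "a \<in> Fl (length t)"
  shows "restr (cat (stretch_list t @ a) z) (tri (Suc (length t))) = stretch_list t @ a"
  using restr_cat_length[of "stretch_list t @ a" z] length_Fl[OF assms] by simp

lemma restr_cat_piece_le:
  assumes "a \<in> Fl (length t)" "k \<le> length t"
  shows "restr (cat (stretch_list t @ a) z) (tri k) = stretch_list (take k t)"
proof -
  have "tri k \<le> length (stretch_list t)" using assms(2) by (simp add: tri_mono)
  then have "restr (cat (stretch_list t @ a) z) (tri k) = take (tri k) (stretch_list t)"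
    by (simp add: restr_cat_le)
  also have "\<dots> = stretch_list (take k t)" using assms(2) by (rule stretch_list_take)
  finally show ?thesis .
qed

lemma PrTr2_take: "T \<in> PrTr2 \<Longrightarrow> s \<in> T \<Longrightarrow> take n s \<in> T"
  by (simp add: PrTr2_def)

lemma restr_in_branches: "x \<in> branches T \<Longrightarrow> restr x n \<in> T"
  by (simp add: branches_def)

lemma offspring_stretch_prefix:
  assumes T: "T \<in> PrTr2" and w: "w \<in> offspring T D" and r: "restr w (tri (length s)) = stretch_list s"
  shows "s \<in> T"
  using w
proof (cases rule: offspringE)
  case (branch x)
  then have "stretch_list (restr x (length s)) = stretch_list s"
    using r by (simp add: restr_stretch_tri)
  then have "s = restr x (length s)" using inj_stretch_list by (simp add: inj_eq)
  then show ?thesis using branch restr_in_branches by metis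
next
  case (piece t a z)
  show ?thesis
  proof (cases "length s \<le> length t")
    case True
    then have "stretch_list (take (length s) t) = stretch_list s"
      using r piece restr_cat_piece_le by metis
    then have "s = take (length s) t" using inj_stretch_list by (simp add: inj_eq)
    then show ?thesis using PrTr2_take[OF T piece(1)] by metis
  next
    case False
    have "restr w (tri (Suc (length t))) = stretch_list (take (Suc (length t)) s)"
      using r False by (intro restr_tri_take) auto
    then have "stretch_list (take (Suc (length t)) s) = stretch_list t @ a"
      using piece restr_cat_piece by metis
    then show ?thesis using stretch_list_neq_Fl piece(2) False by fastforce
  qed
qed

lemma restr_cat_piece_eq:
  assumes a: "a \<in> Fl (length t)" and a': "a' \<in> Fl (length t')"
    and r: "restr (cat (stretch_list t' @ a') z) (tri (Suc (length t))) = stretch_list t @ a"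
  shows "t' = t \<and> a' = a"
proof -
  let ?w = "cat (stretch_list t' @ a') z"
  consider "length t' = length t" | "length t' < length t" | "length t < length t'" by linarith
  then show ?thesis
  proof cases
    case 1
    then have "stretch_list t' @ a' = stretch_list t @ a"
      using r restr_cat_piece[OF a'] by metis
    then show ?thesis
      using 1 inj_stretch_list by (auto simp: append_eq_append_conv inj_eq)
  next
    case 2
    have "restr ?w (tri (length t)) = take (tri (length t)) (restr ?w (tri (Suc (length t))))"
      by (simp add: take_restr tri_mono del: tri.simps)
    then have "restr ?w (tri (length t)) = stretch_list t" using r by simp
    then have "restr ?w (tri (Suc (length t'))) = stretch_list (take (Suc (length t')) t)"
      using 2 by (intro restr_tri_take) simp_all
    then have "stretch_list (take (Suc (length t')) t) = stretch_list t' @ a'"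
      using restr_cat_piece[OF a'] by metis
    then show ?thesis using stretch_list_neq_Fl a' 2 by fastforce
  next
    case 3
    then have "restr ?w (tri (Suc (length t))) = stretch_list (take (Suc (length t)) t')"
      using restr_cat_piece_le[OF a', of "Suc (length t)" z] by simp
    then have "stretch_list (take (Suc (length t)) t') = stretch_list t @ a" using r by simp
    then show ?thesis using stretch_list_neq_Fl a 3 by fastforce
  qed
qed

lemma offspring_piece:
  assumes w: "w \<in> offspring T D" and a: "a \<in> Fl (length t)"
    and r: "restr w (tri (Suc (length t))) = stretch_list t @ a"
  shows "t \<in> T" "(\<lambda>i. w (tri (Suc (length t)) + i)) \<in> D t"
proof -
  have "t \<in> T \<and> (\<lambda>i. w (tri (Suc (length t)) + i)) \<in> D t"
    using w
  proof (cases rule: offspringE)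
    case (branch x)
    then have "stretch_list (restr x (Suc (length t))) = stretch_list t @ a"
      using r restr_stretch_tri[of x "Suc (length t)"] by (simp del: tri.simps)
    then show ?thesis using stretch_list_neq_Fl a by fastforce
  next
    case (piece t' a' z)
    then have "t' = t" "a' = a" using restr_cat_piece_eq[OF a piece(2)] r by simp_all
    moreover have "length (stretch_list t' @ a') = tri (Suc (length t))"
      using length_Fl[OF piece(2)] \<open>t' = t\<close> by simp
    then have "(\<lambda>i. w (tri (Suc (length t)) + i)) = z"
      using piece(4) by (auto simp: cat_def fun_eq_iff)
    ultimately show ?thesis using piece by simp
  qed
  then show "t \<in> T" "(\<lambda>i. w (tri (Suc (length t)) + i)) \<in> D t" by simp_all
qed

definition finitely_determined :: "(bool list \<Rightarrow> cantor set) \<Rightarrow> bool" where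
  "finitely_determined D \<longleftrightarrow> (\<forall>t. \<exists>q. \<forall>z z'. restr z q = restr z' q \<longrightarrow> (z \<in> D t \<longleftrightarrow> z' \<in> D t))"

lemma stretch_or_flip:
  obtains (stretch) x where "y = stretch x"
  | (flip) t a where "a \<in> Fl (length t)" "restr y (tri (Suc (length t))) = stretch_list t @ a"
proof (cases "\<forall>n i. i \<le> n \<longrightarrow> y (tri n + i) = y (tri n)")
  case True
  then show ?thesis using stretch eq_stretchI by blast
next
  case False
  define P where "P = (\<lambda>n. \<exists>i\<le>n. y (tri n + i) \<noteq> y (tri n))"
  define n where "n = (LEAST n. P n)"
  have Pn: "P n" unfolding n_def using False P_def by (metis LeastI_ex)
  have notP: "\<And>m. m < n \<Longrightarrow> \<not> P m" unfolding n_def by (rule not_less_Least)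
  define t where "t = restr (\<lambda>n. y (tri n)) n"
  define a where "a = map (\<lambda>i. y (tri n + i)) [0..<Suc n]"
  have "restr y (tri n) = restr (stretch (\<lambda>n. y (tri n))) (tri n)"
  proof (unfold restr_eq_iff, intro allI impI)
    fix j assume "j < tri n"
    obtain m i where j: "j = tri m + i" "i \<le> m" using tri_decomp by blast
    with \<open>j < tri n\<close> have "m < n" using tri_mono[of n m] by linarith
    then have "y j = y (tri m)" using notP[of m] j unfolding P_def by auto
    moreover have "stretch (\<lambda>n. y (tri n)) j = y (tri m)" using j by (intro stretch_block) auto
    ultimately show "y j = stretch (\<lambda>n. y (tri n)) j" by simp
  qed
  then have "restr y (tri n) = stretch_list t" by (simp add: restr_stretch_tri t_def)
  moreover have "map y [tri n..<tri n + Suc n] = a"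
    unfolding a_def by (rule nth_equalityI) (simp_all del: upt_Suc)
  ultimately have "restr y (tri (Suc (length t))) = stretch_list t @ a"
    using restr_add[of y "tri n" "Suc n"] by (simp add: t_def del: upt_Suc)
  moreover have "a \<in> Fl (length t)"
  proof -
    obtain i where i: "i \<le> n" "y (tri n + i) \<noteq> y (tri n)" using Pn unfolding P_def by blast
    then have "a ! i \<noteq> a ! 0" by (simp add: a_def nth_append del: upt_Suc)
    have "a \<noteq> replicate (Suc n) b" for b
    proof
      assume "a = replicate (Suc n) b"
      then have "a ! i = b" "a ! 0 = b" using i(1) by (simp_all only: nth_replicate)
      with \<open>a ! i \<noteq> a ! 0\<close> show False by simp
    qed
    then show ?thesis by (simp add: Fl_def a_def t_def)
  qed
  ultimately show ?thesis using flip by blast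
qed

lemma closedin_offspring:
  assumes T: "T \<in> PrTr2" and D: "finitely_determined D"
  shows "closedin cantor_top (offspring T D)"
  unfolding closedin_cantor_top_iff
proof (intro allI impI)
  fix y assume h: "\<forall>N. \<exists>w\<in>offspring T D. restr w N = restr y N"
  show "y \<in> offspring T D"
  proof (cases y rule: stretch_or_flip)
    case (stretch x)
    have "restr x n \<in> T" for n
    proof -
      obtain w where w: "w \<in> offspring T D" "restr w (tri n) = restr y (tri n)" using h by blast
      then have "restr w (tri (length (restr x n))) = stretch_list (restr x n)"
        using stretch by (simp add: restr_stretch_tri)
      then show ?thesis using offspring_stretch_prefix[OF T w(1)] by blast
    qed
    then show ?thesis using stretch by (simp add: branches_def stretch_in_offspring)
  next
    case (flip t a)
    let ?L = "tri (Suc (length t))"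
    obtain q where q: "\<And>z z'. restr z q = restr z' q \<Longrightarrow> (z \<in> D t \<longleftrightarrow> z' \<in> D t)"
      using D unfolding finitely_determined_def by blast
    obtain w where w: "w \<in> offspring T D" "restr w (?L + q) = restr y (?L + q)"
      using h by blast
    then have "restr w ?L = restr y ?L" by (metis le_add1 take_restr)
    then have "t \<in> T" "(\<lambda>i. w (?L + i)) \<in> D t"
      using offspring_piece[OF w(1) flip(1)] flip(2) by simp_all
    moreover have "restr (\<lambda>i. w (?L + i)) q = restr (\<lambda>i. y (?L + i)) q"
      using w(2) by (simp add: restr_eq_iff)
    ultimately have "(\<lambda>i. y (?L + i)) \<in> D t" using q by blast
    moreover have "y = cat (stretch_list t @ a) (\<lambda>i. y (?L + i))"
      using cat_restr_shift[of y "stretch_list t @ a"] flip length_Fl[OF flip(1)] by simp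
    ultimately show ?thesis using cat_in_offspring[OF \<open>t \<in> T\<close> flip(1)] by metis
  qed
qed

lemma PrTr2_branch_through:
  assumes T: "T \<in> PrTr2" and s: "s \<in> T"
  shows "\<exists>x\<in>branches T. restr x (length s) = s"
proof -
  define ext where "ext = (\<lambda>u. SOME v. v \<in> T \<and> length u < length v \<and> take (length u) v = u)"
  have ext: "ext u \<in> T \<and> length u < length (ext u) \<and> take (length u) (ext u) = u" if "u \<in> T" for u
  proof -
    have "\<exists>v\<in>T. length u < length v \<and> take (length u) v = u" using T that by (simp add: PrTr2_def)
    then show ?thesis unfolding ext_def by (rule someI2_bex) blast
  qed
  define f where "f = rec_nat s (\<lambda>_ u. ext u)"
  have f0: "f 0 = s" and fS: "\<And>k. f (Suc k) = ext (f k)" by (simp_all add: f_def)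
  have fT: "f k \<in> T \<and> length s + k \<le> length (f k)" for k
  proof (induction k)
    case (Suc k)
    then show ?case using ext[of "f k"] fS[of k] by simp
  qed (use s f0 in simp)
  have chain: "take (length (f k)) (f m) = f k \<and> length (f k) \<le> length (f m)" if "k \<le> m" for k m
    using that
  proof (induction m rule: dec_induct)
    case (step m)
    have "take (length (f m)) (f (Suc m)) = f m" "length (f m) \<le> length (f (Suc m))"
      using ext[of "f m"] fT[of m] fS[of m] by simp_all
    with step.IH show ?case by (metis min.absorb1 take_take le_trans)
  qed simp
  define x where "x = (\<lambda>i. f (Suc i) ! i)"
  have rx: "restr x n = take n (f n)" for n
  proof (rule nth_equalityI)
    show "length (restr x n) = length (take n (f n))" using fT[of n] by simp
    fix i assume "i < length (restr x n)"
    then have i: "i < n" by simp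
    have "i < length (f (Suc i))" using fT[of "Suc i"] by simp
    then have "x i = f n ! i" unfolding x_def using chain[of "Suc i" n] i by (metis nth_take Suc_leI)
    then show "restr x n ! i = take n (f n) ! i" using i by simp
  qed
  have "x \<in> branches T"
    unfolding branches_def using rx fT PrTr2_take[OF T] by simp
  moreover have "restr x (length s) = s"
    using rx chain[of 0 "length s"] f0 by simp
  ultimately show ?thesis by blast
qed

lemma offspring_twin:
  assumes T: "T \<in> PrTr2" and T': "T' \<in> PrTr2"
    and agree: "\<And>u. length u \<le> N \<Longrightarrow> u \<in> T \<longleftrightarrow> u \<in> T'"
    and y: "y \<in> offspring T D"
  shows "\<exists>y'\<in>offspring T' D. restr y' N = restr y N"
proof -
  have branch_twin: "\<exists>y'\<in>offspring T' D. restr y' N = restr (stretch x) N" if x: "x \<in> branches T" for x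
  proof -
    have "restr x N \<in> T'" using agree[of "restr x N"] restr_in_branches[OF x] by simp
    then obtain x' where x': "x' \<in> branches T'" "restr x' N = restr x N"
      using PrTr2_branch_through[OF T'] by fastforce
    then show ?thesis using restr_stretch_eq stretch_in_offspring by blast
  qed
  from y show ?thesis
  proof (cases rule: offspringE)
    case (branch x)
    then show ?thesis using branch_twin by blast
  next
    case (piece t a z)
    show ?thesis
    proof (cases "length t < N")
      case True
      then have "y \<in> offspring T' D" using agree piece cat_in_offspring by simp
      then show ?thesis by blast
    next
      case False
      obtain x where x: "x \<in> branches T" "restr x (length t) = t"
        using PrTr2_branch_through[OF T piece(1)] by blast
      have "restr y (tri (length t)) = stretch_list t"
        using piece restr_cat_piece_le[of a t "length t" z] by simp
      also have "\<dots> = restr (stretch x) (tri (length t))" using x(2) by (simp add: restr_stretch_tri)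
      finally have "restr y N = restr (stretch x) N"
        using False tri_ge[of "length t"] by (metis le_trans not_less take_restr)
      then show ?thesis using branch_twin[OF x(1)] by simp
    qed
  qed
qed

definition tree_cylinder :: "nat \<Rightarrow> bool list set \<Rightarrow> bool list set set" where
  "tree_cylinder N T0 = {T. \<forall>u. length u \<le> N \<longrightarrow> (u \<in> T \<longleftrightarrow> u \<in> T0)}"

lemma topspace_tree_top [simp]: "topspace tree_top = UNIV"
  unfolding tree_top_def by (auto simp: topology_generated_by_topspace)

lemma openin_tree_cylinder: "openin tree_top (tree_cylinder N T0)"
proof -
  let ?S = "range (\<lambda>s. {T. s \<in> T}) \<union> range (\<lambda>s. {T. s \<notin> T})"
  let ?f = "\<lambda>u. if u \<in> T0 then {T. u \<in> T} else {T. u \<notin> T}"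
  let ?L = "{u::bool list. length u \<le> N}"
  have "finite ?L"
    using finite_lists_length_le[of "UNIV::bool set" N] by simp
  moreover have "?f ` ?L \<noteq> {}"
  proof -
    have "?f [] \<in> ?f ` ?L" by (rule imageI) simp
    then show ?thesis by blast
  qed
  ultimately have "generate_topology_on ?S (\<Inter> (?f ` ?L))"
    by (intro generate_topology_on_Inter) (auto intro: generate_topology_on.Basis)
  moreover have "tree_cylinder N T0 = \<Inter> (?f ` ?L)"
    by (auto simp: tree_cylinder_def split: if_splits)
  ultimately show ?thesis
    by (simp add: tree_top_def openin_topology_generated_by_iff)
qed

lemma openin_PrTr2I:
  assumes "A \<subseteq> PrTr2" "\<And>T0. T0 \<in> A \<Longrightarrow> \<exists>N. tree_cylinder N T0 \<inter> PrTr2 \<subseteq> A"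
  shows "openin (subtopology tree_top PrTr2) A"
proof (subst openin_subopen, intro ballI)
  fix T0 assume "T0 \<in> A"
  then obtain N where N: "tree_cylinder N T0 \<inter> PrTr2 \<subseteq> A" using assms(2) by blast
  have "openin (subtopology tree_top PrTr2) (tree_cylinder N T0 \<inter> PrTr2)"
    using openin_tree_cylinder by (auto simp: openin_subtopology)
  moreover have "T0 \<in> tree_cylinder N T0 \<inter> PrTr2"
    using \<open>T0 \<in> A\<close> assms(1) by (auto simp: tree_cylinder_def)
  ultimately show "\<exists>T. openin (subtopology tree_top PrTr2) T \<and> T0 \<in> T \<and> T \<subseteq> A" using N by blast
qed

lemma openin_offspring_subset:
  assumes D: "finitely_determined D" and U: "openin cantor_top U"
  shows "openin (subtopology tree_top PrTr2) {T \<in> PrTr2. offspring T D \<subseteq> U}"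
proof (rule openin_PrTr2I)
  fix T0 assume "T0 \<in> {T \<in> PrTr2. offspring T D \<subseteq> U}"
  then have T0: "T0 \<in> PrTr2" "offspring T0 D \<subseteq> U" by simp_all
  have "compactin cantor_top (offspring T0 D)"
    using closedin_compact_space[OF compact_space_cantor_top closedin_offspring[OF T0(1) D]] .
  then obtain N where N: "\<forall>y\<in>offspring T0 D. Nbhd (restr y N) \<subseteq> U"
    using compactin_uniform_Nbhd[OF _ U T0(2)] by blast
  have "offspring T D \<subseteq> U" if T: "T \<in> tree_cylinder N T0 \<inter> PrTr2" for T
  proof
    fix y assume y: "y \<in> offspring T D"
    obtain y0 where y0: "y0 \<in> offspring T0 D" "restr y0 N = restr y N"
      using offspring_twin[of T T0 N y D] T T0(1) y by (auto simp: tree_cylinder_def)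
    then have "y \<in> Nbhd (restr y0 N)" by (simp add: mem_Nbhd)
    then show "y \<in> U" using N y0(1) by blast
  qed
  then show "\<exists>N. tree_cylinder N T0 \<inter> PrTr2 \<subseteq> {T \<in> PrTr2. offspring T D \<subseteq> U}" by blast
qed simp

lemma openin_offspring_meets:
  assumes U: "openin cantor_top U"
  shows "openin (subtopology tree_top PrTr2) {T \<in> PrTr2. offspring T D \<inter> U \<noteq> {}}"
proof (rule openin_PrTr2I)
  fix T0 assume "T0 \<in> {T \<in> PrTr2. offspring T D \<inter> U \<noteq> {}}"
  then obtain y where T0: "T0 \<in> PrTr2" "y \<in> offspring T0 D" "y \<in> U" by auto
  obtain N where N: "Nbhd (restr y N) \<subseteq> U" using openin_cantor_top_Nbhd[OF U T0(3)] by blast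
  have "offspring T D \<inter> U \<noteq> {}" if T: "T \<in> tree_cylinder N T0 \<inter> PrTr2" for T
  proof -
    obtain y' where y': "y' \<in> offspring T D" "restr y' N = restr y N"
      using offspring_twin[of T0 T N y D] T T0 by (auto simp: tree_cylinder_def)
    then have "y' \<in> Nbhd (restr y N)" by (simp add: mem_Nbhd)
    then show ?thesis using N y'(1) by blast
  qed
  then show "\<exists>N. tree_cylinder N T0 \<inter> PrTr2 \<subseteq> {T \<in> PrTr2. offspring T D \<inter> U \<noteq> {}}" by blast
qed simp

lemma continuous_map_offspring:
  assumes D: "finitely_determined D"
  shows "continuous_map (subtopology tree_top PrTr2) vietoris (\<lambda>T. offspring T D)"
proof -
  let ?S = "{{K. K \<subseteq> U} | U. openin cantor_top U} \<union> {{K. K \<inter> U \<noteq> {}} | U. openin cantor_top U}"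
  have "continuous_map (subtopology tree_top PrTr2) (topology_generated_by ?S) (\<lambda>T. offspring T D)"
  proof (rule continuous_on_generated_topo)
    have "UNIV \<in> ?S" using openin_topspace[of cantor_top] by auto
    then show "(\<lambda>T. offspring T D) ` topspace (subtopology tree_top PrTr2) \<subseteq> \<Union> ?S" by blast
  next
    fix V assume "V \<in> ?S"
    then consider (sub) U where "openin cantor_top U" "V = {K. K \<subseteq> U}"
      | (meets) U where "openin cantor_top U" "V = {K. K \<inter> U \<noteq> {}}" by blast
    then have "openin (subtopology tree_top PrTr2) {T \<in> PrTr2. offspring T D \<in> V}"
      by cases (simp_all add: openin_offspring_subset[OF D] openin_offspring_meets)
    moreover have "(\<lambda>T. offspring T D) -` V \<inter> topspace (subtopology tree_top PrTr2) =
        {T \<in> PrTr2. offspring T D \<in> V}" by auto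
    ultimately show "openin (subtopology tree_top PrTr2) ((\<lambda>T. offspring T D) -` V \<inter> topspace (subtopology tree_top PrTr2))"
      by simp
  qed
  moreover have "compactin cantor_top (offspring T D)" if "T \<in> PrTr2" for T
    using closedin_compact_space[OF compact_space_cantor_top closedin_offspring[OF that D]] .
  ultimately show ?thesis
    unfolding vietoris_def continuous_map_in_subtopology by auto
qed

subsection \<open>The coin-tossing measure\<close>

abbreviation coin :: "bool measure" where
  "coin \<equiv> measure_pmf (pmf_of_set UNIV)"

interpretation mu: prob_space mu
  unfolding mu_def by (rule prob_space_PiM) (rule prob_space_measure_pmf)

lemma Nbhd_prod_emb: "Nbhd s = prod_emb UNIV (\<lambda>_. coin) {..<length s} (Pi\<^sub>E {..<length s} (\<lambda>i. {s!i}))"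
proof (intro set_eqI)
  fix z
  have "z \<in> prod_emb UNIV (\<lambda>_. coin) {..<length s} (Pi\<^sub>E {..<length s} (\<lambda>i. {s!i})) \<longleftrightarrow>
      (\<forall>i\<in>{..<length s}. z i \<in> {s!i})"
    by (simp add: prod_emb_def restrict_PiE_iff Pi_iff)
  also have "\<dots> \<longleftrightarrow> z \<in> Nbhd s" unfolding mem_Nbhd restr_eq_list_iff by auto
  finally show "z \<in> Nbhd s \<longleftrightarrow> z \<in> prod_emb UNIV (\<lambda>_. coin) {..<length s} (Pi\<^sub>E {..<length s} (\<lambda>i. {s!i}))"
    by simp
qed

lemma sets_mu_Nbhd [simp]: "Nbhd s \<in> sets mu"
  unfolding Nbhd_prod_emb mu_def by (rule sets_PiM_I) auto

lemma measure_Nbhd: "measure mu (Nbhd s) = (1/2) ^ length s"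
proof -
  have "emeasure mu (Nbhd s) = (\<Prod>i\<in>{..<length s}. emeasure coin {s!i})"
    unfolding Nbhd_prod_emb mu_def by (rule emeasure_PiM_emb) (auto intro: prob_space_measure_pmf)
  also have "\<dots> = ennreal (1/2) ^ length s"
    by (simp add: emeasure_pmf_single)
  also have "\<dots> = ennreal ((1/2) ^ length s)"
    by (rule ennreal_power) simp
  finally show ?thesis
    unfolding mu.emeasure_eq_measure by (subst (asm) ennreal_inj) simp_all
qed

definition cylinder :: "nat \<Rightarrow> bool list set \<Rightarrow> cantor set" where
  "cylinder L E = {z. restr z L \<in> E}"

lemma cylinder_eq_UN_Nbhd: "cylinder L E = (\<Union>e\<in>E \<inter> {e. length e = L}. Nbhd e)"
  by (auto simp: cylinder_def mem_Nbhd)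

lemma finite_lists_length: "finite {e :: bool list. length e = L}"
  using finite_lists_length_eq[of "UNIV::bool set" L] by simp

lemma card_lists_length: "card {e :: bool list. length e = L} = 2 ^ L"
  using card_lists_length_eq[of "UNIV::bool set" L] by simp

lemma sets_mu_cylinder [simp]: "cylinder L E \<in> sets mu"
  unfolding cylinder_eq_UN_Nbhd using finite_lists_length by (intro sets.finite_UN) auto

lemma measure_cylinder:
  assumes "E \<subseteq> {e. length e = L}"
  shows "measure mu (cylinder L E) = card E * (1/2) ^ L"
proof -
  have fin: "finite E" using finite_subset[OF assms finite_lists_length] .
  have "disjoint_family_on Nbhd E"
  proof (unfold disjoint_family_on_def, intro ballI impI)
    fix m n assume mn: "m \<in> E" "n \<in> E" "m \<noteq> n"
    then have "length m = L" "length n = L" using assms by auto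
    then show "Nbhd m \<inter> Nbhd n = {}" using mn(3) by (auto simp: mem_Nbhd)
  qed
  moreover have E: "E \<inter> {e. length e = L} = E" using assms by blast
  ultimately have "measure mu (cylinder L E) = (\<Sum>e\<in>E. measure mu (Nbhd e))"
    unfolding cylinder_eq_UN_Nbhd E using fin by (intro mu.finite_measure_finite_Union) auto
  also have "\<dots> = card E * (1/2) ^ L"
    using assms by (simp add: measure_Nbhd subset_iff)
  finally show ?thesis .
qed

lemma openin_cylinder: "openin cantor_top (cylinder L E)"
proof (unfold openin_cantor_top_iff, intro ballI)
  fix z assume "z \<in> cylinder L E"
  then have "Nbhd (restr z L) \<subseteq> cylinder L E" by (auto simp: cylinder_def mem_Nbhd)
  then show "\<exists>n. Nbhd (restr z n) \<subseteq> cylinder L E" by blast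
qed

lemma closedin_cylinder: "closedin cantor_top (cylinder L E)"
proof -
  have "UNIV - cylinder L E = cylinder L (- E)" by (auto simp: cylinder_def)
  then show ?thesis using openin_cylinder by (simp add: closedin_def)
qed

lemma sets_mu_closedin:
  assumes "closedin cantor_top A"
  shows "A \<in> sets mu"
proof -
  have "A = (\<Inter>N. cylinder N ((\<lambda>w. restr w N) ` A))"
  proof (intro set_eqI iffI)
    fix y assume "y \<in> (\<Inter>N. cylinder N ((\<lambda>w. restr w N) ` A))"
    then have "restr y N \<in> (\<lambda>w. restr w N) ` A" for N by (simp add: cylinder_def)
    then have "\<forall>N. \<exists>w\<in>A. restr w N = restr y N" by (metis imageE)
    then show "y \<in> A" using assms by (simp add: closedin_cantor_top_iff)
  next
    fix y assume "y \<in> A"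
    then show "y \<in> (\<Inter>N. cylinder N ((\<lambda>w. restr w N) ` A))" by (simp add: cylinder_def)
  qed
  also have "\<dots> \<in> sets mu" by (rule sets.countable_INT) auto
  finally show ?thesis .
qed

definition rel_measure :: "cantor set \<Rightarrow> bool list \<Rightarrow> real" where
  "rel_measure A u = measure mu (A \<inter> Nbhd u) * 2 ^ length u"

lemma ratio_eq_rel_measure: "A \<in> sets mu \<Longrightarrow> ratio A z n = rel_measure A (restr z n)"
proof -
  assume "A \<in> sets mu"
  then have "A \<inter> Nbhd (restr z n) \<in> sets mu" using sets_mu_Nbhd by (rule sets.Int)
  then show ?thesis
    by (simp add: ratio_def rel_measure_def measure_completion measure_Nbhd power_one_over)
qed

lemma rel_measure_split:
  assumes "A \<in> sets mu"
  shows "rel_measure A u = (rel_measure A (u @ [False]) + rel_measure A (u @ [True])) / 2"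
proof -
  have Nbhd_split: "Nbhd u = Nbhd (u @ [False]) \<union> Nbhd (u @ [True])"
  proof (intro set_eqI iffI)
    fix z assume "z \<in> Nbhd u"
    then show "z \<in> Nbhd (u @ [False]) \<union> Nbhd (u @ [True])"
      by (cases "z (length u)") (auto simp: mem_Nbhd restr_Suc)
  qed (auto simp: mem_Nbhd restr_Suc)
  have "(A \<inter> Nbhd (u @ [False])) \<inter> (A \<inter> Nbhd (u @ [True])) = {}"
    by (auto simp: mem_Nbhd restr_Suc)
  then have "measure mu (A \<inter> Nbhd u) = measure mu (A \<inter> Nbhd (u @ [False])) + measure mu (A \<inter> Nbhd (u @ [True]))"
    unfolding Nbhd_split Int_Un_distrib using assms by (intro mu.finite_measure_Union) auto
  then show ?thesis unfolding rel_measure_def by (simp add: algebra_simps)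
qed

lemma rel_measure_nonneg: "0 \<le> rel_measure A u"
  by (simp add: rel_measure_def)

lemma rel_measure_le_1: "rel_measure A u \<le> 1"
proof -
  have "measure mu (A \<inter> Nbhd u) \<le> measure mu (Nbhd u)"
    by (rule mu.finite_measure_mono) auto
  then have "rel_measure A u \<le> (1/2) ^ length u * 2 ^ length u"
    unfolding rel_measure_def measure_Nbhd by (intro mult_right_mono) auto
  then show ?thesis by (simp add: power_one_over)
qed

lemma rel_measure_empty: "A \<inter> Nbhd u = {} \<Longrightarrow> rel_measure A u = 0"
  by (simp add: rel_measure_def)

lemma rel_measure_full: "Nbhd u \<subseteq> A \<Longrightarrow> rel_measure A u = 1"
  by (simp add: rel_measure_def Int_absorb1 measure_Nbhd power_one_over)

lemma cat_image_cylinder: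
  assumes "E \<subseteq> {e. length e = q}"
  shows "cat u ` cylinder q E = cylinder (length u + q) ((@) u ` E)"
proof (intro set_eqI iffI)
  fix w assume "w \<in> cat u ` cylinder q E"
  then show "w \<in> cylinder (length u + q) ((@) u ` E)" by (auto simp: cylinder_def restr_cat)
next
  fix w assume "w \<in> cylinder (length u + q) ((@) u ` E)"
  then obtain e where e: "e \<in> E" "restr w (length u + q) = u @ e" by (auto simp: cylinder_def)
  have "restr w (length u) = take (length u) (restr w (length u + q))" by (simp add: take_restr)
  then have "restr w (length u) = u" using e(2) by simp
  then have w: "w = cat u (\<lambda>i. w (length u + i))" by (rule cat_restr_shift)
  have "u @ restr (\<lambda>i. w (length u + i)) q = u @ e"
    using e(2) by (subst (asm) w) (simp add: restr_cat)
  then show "w \<in> cat u ` cylinder q E" using e(1) w by (auto simp: cylinder_def)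
qed

lemma rel_measure_cylinder:
  assumes "E \<subseteq> {e. length e = q}"
  shows "rel_measure (cylinder (length u + q) ((@) u ` E)) u = card E * (1/2) ^ q"
proof -
  have sub: "cylinder (length u + q) ((@) u ` E) \<subseteq> Nbhd u"
    by (auto simp: cylinder_def mem_Nbhd) (metis append_eq_conv_conj length_restr le_add1 take_restr)
  have "(@) u ` E \<subseteq> {e. length e = length u + q}" using assms by auto
  then have "measure mu (cylinder (length u + q) ((@) u ` E)) = card ((@) u ` E) * (1/2) ^ (length u + q)"
    by (rule measure_cylinder)
  also have "card ((@) u ` E) = card E" by (rule card_image) (simp add: inj_on_def)
  finally show ?thesis
    using sub by (simp add: rel_measure_def Int_absorb2 power_add power_one_over field_simps)
qed

lemma dualistic_cylinder: "dualistic (cylinder L E)"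
proof -
  have "has_density (cylinder L E) z (if restr z L \<in> E then 1 else 0)" for z
  proof -
    have "ratio (cylinder L E) z n = (if restr z L \<in> E then 1 else 0)" if n: "L \<le> n" for n
    proof -
      have "restr w L = restr z L" if "w \<in> Nbhd (restr z n)" for w
        using that n by (metis mem_Nbhd length_restr take_restr)
      then have "if restr z L \<in> E then Nbhd (restr z n) \<subseteq> cylinder L E else cylinder L E \<inter> Nbhd (restr z n) = {}"
        by (auto simp: cylinder_def)
      then show ?thesis
        by (simp add: ratio_eq_rel_measure rel_measure_full rel_measure_empty split: if_splits)
    qed
    then show ?thesis
      unfolding has_density_def by (intro tendsto_eventually eventually_sequentiallyI)
  qed
  then show ?thesis by (simp add: dualistic_def) metis
qed

lemma limsup_minus_liminf_eq_0_iff: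
  fixes X :: "nat \<Rightarrow> real"
  assumes "\<And>n. 0 \<le> X n" "\<And>n. X n \<le> 1"
  shows "limsup (\<lambda>n. ereal (X n)) - liminf (\<lambda>n. ereal (X n)) = 0 \<longleftrightarrow> convergent X"
proof
  assume "convergent X"
  then obtain L where "X \<longlonglongrightarrow> L" by (auto simp: convergent_def)
  then have "(\<lambda>n. ereal (X n)) \<longlonglongrightarrow> ereal L" by simp
  then have "limsup (\<lambda>n. ereal (X n)) = ereal L" "liminf (\<lambda>n. ereal (X n)) = ereal L"
    by (simp_all add: lim_imp_Limsup lim_imp_Liminf)
  then show "limsup (\<lambda>n. ereal (X n)) - liminf (\<lambda>n. ereal (X n)) = 0" by simp
next
  assume d: "limsup (\<lambda>n. ereal (X n)) - liminf (\<lambda>n. ereal (X n)) = 0"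
  have lo: "0 \<le> liminf (\<lambda>n. ereal (X n))" using assms(1) by (intro Liminf_bounded) simp
  have hi: "limsup (\<lambda>n. ereal (X n)) \<le> 1" using assms(2) by (intro Limsup_bounded) simp
  have le: "liminf (\<lambda>n. ereal (X n)) \<le> limsup (\<lambda>n. ereal (X n))" by (rule Liminf_le_Limsup) simp
  obtain a where a: "limsup (\<lambda>n. ereal (X n)) = ereal a"
    using lo le hi by (cases "limsup (\<lambda>n. ereal (X n))") auto
  obtain b where b: "liminf (\<lambda>n. ereal (X n)) = ereal b"
    using lo le hi by (cases "liminf (\<lambda>n. ereal (X n))") auto
  have "a = b" using d a b by simp
  then have "X \<longlonglongrightarrow> a" using a b by (intro limsup_le_liminf_real) simp_all
  then show "convergent X" by (auto simp: convergent_def)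
qed

subsection \<open>Densities of the offspring of clopen families\<close>

lemma offspring_Int_Nbhd_piece:
  assumes t: "t \<in> T" and a: "a \<in> Fl (length t)"
  shows "offspring T D \<inter> Nbhd (stretch_list t @ a) = cat (stretch_list t @ a) ` D t"
proof (intro set_eqI iffI)
  let ?u = "stretch_list t @ a"
  have lu: "length ?u = tri (Suc (length t))" using length_Fl[OF a] by simp
  fix w
  assume w: "w \<in> offspring T D \<inter> Nbhd ?u"
  then have "restr w (tri (Suc (length t))) = ?u" using lu by (simp add: mem_Nbhd)
  then have "(\<lambda>i. w (tri (Suc (length t)) + i)) \<in> D t" using offspring_piece(2)[OF _ a] w by blast
  moreover have "w = cat ?u (\<lambda>i. w (length ?u + i))" using w by (intro cat_restr_shift) (simp add: mem_Nbhd)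
  ultimately show "w \<in> cat ?u ` D t" using lu by auto
next
  fix w assume "w \<in> cat (stretch_list t @ a) ` D t"
  then obtain z where z: "z \<in> D t" "w = cat (stretch_list t @ a) z" by blast
  then have "w \<in> Nbhd (stretch_list t @ a)" unfolding mem_Nbhd by (simp only: restr_cat_length)
  then show "w \<in> offspring T D \<inter> Nbhd (stretch_list t @ a)"
    using cat_in_offspring[of t T a z D, OF t a z(1)] z(2) by simp
qed

definition nonconst :: "bool list \<Rightarrow> bool" where
  "nonconst b \<longleftrightarrow> (\<exists>i<length b. b ! i \<noteq> b ! 0)"

lemma Fl_iff_nonconst: "a \<in> Fl n \<longleftrightarrow> length a = Suc n \<and> nonconst a"
proof
  assume a: "a \<in> Fl n"
  have "nonconst a"
  proof (rule ccontr)
    assume "\<not> nonconst a"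
    then have h: "\<And>i. i < length a \<Longrightarrow> a ! i = a ! 0" by (simp add: nonconst_def)
    have "a = replicate (Suc n) (a ! 0)"
    proof (rule nth_equalityI)
      show "length a = length (replicate (Suc n) (a ! 0))" using length_Fl[OF a] by simp
      fix i assume i: "i < length a"
      then have "replicate (Suc n) (a ! 0) ! i = a ! 0" using length_Fl[OF a] by (simp only: nth_replicate)
      then show "a ! i = replicate (Suc n) (a ! 0) ! i" using h[OF i] by simp
    qed
    with Fl_neq_replicate[OF a] show False by blast
  qed
  then show "length a = Suc n \<and> nonconst a" using length_Fl[OF a] by simp
next
  assume a: "length a = Suc n \<and> nonconst a"
  then obtain i where i: "i < Suc n" "a ! i \<noteq> a ! 0" by (auto simp: nonconst_def)
  have "a \<noteq> replicate (Suc n) b" for b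
  proof
    assume "a = replicate (Suc n) b"
    then have "a ! i = b" "a ! 0 = b" using i(1) by (simp_all only: nth_replicate zero_less_Suc)
    then show False using i(2) by simp
  qed
  then show "a \<in> Fl n" using a by (simp add: Fl_def)
qed

lemma nonconst_snoc: "nonconst b \<Longrightarrow> nonconst (b @ [x])"
proof -
  assume "nonconst b"
  then obtain i where i: "i < length b" "b ! i \<noteq> b ! 0" by (auto simp: nonconst_def)
  moreover have "0 < length b" using i(1) by linarith
  ultimately have "(b @ [x]) ! i = b ! i" "(b @ [x]) ! 0 = b ! 0" by (simp_all only: nth_append if_True)
  then show "nonconst (b @ [x])" unfolding nonconst_def using i by (intro exI[of _ i]) simp
qed

lemma nonconst_replicate_snoc: "0 < k \<Longrightarrow> nonconst (replicate k b @ [\<not> b])"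
  by (auto simp: nonconst_def nth_append intro!: exI[of _ k])

lemma abs_convex_comb_diff_le:
  fixes h a b c :: real
  assumes "0 \<le> h" "h \<le> 1"
  shows "\<bar>(1 - h) * a + h * b - c\<bar> \<le> \<bar>a - c\<bar> + \<bar>b - c\<bar>"
proof -
  have e: "(1 - h) * a + h * b - c = (1 - h) * (a - c) + h * (b - c)" by (simp add: algebra_simps)
  have "\<bar>(1 - h) * (a - c)\<bar> \<le> \<bar>a - c\<bar>" "\<bar>h * (b - c)\<bar> \<le> \<bar>b - c\<bar>"
    using assms by (simp_all add: abs_mult mult_left_le_one_le)
  then show ?thesis unfolding e using abs_triangle_ineq[of "(1 - h) * (a - c)" "h * (b - c)"] by linarith
qed

lemma half_power_eventually_less: "0 < r \<Longrightarrow> \<exists>n0. \<forall>n\<ge>n0. (1/2::real) ^ n < r"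
proof -
  assume r: "0 < r"
  have "(\<lambda>n. (1/2::real) ^ n) \<longlonglongrightarrow> 0" by (rule LIMSEQ_realpow_zero) simp_all
  from LIMSEQ_D[OF this r] obtain n0 where "\<forall>n\<ge>n0. norm ((1/2::real) ^ n - 0) < r" by blast
  then show ?thesis by auto
qed

locale clopen_family =
  fixes q :: "bool list \<Rightarrow> nat" and E :: "bool list \<Rightarrow> bool list set"
  assumes E_subset: "\<And>t. E t \<subseteq> {e. length e = q t}"
begin

definition D :: "bool list \<Rightarrow> cantor set" where
  "D t = cylinder (q t) (E t)"

definition mass :: "bool list \<Rightarrow> real" where
  "mass t = card (E t) * (1/2) ^ q t"

lemma finitely_determined_D: "finitely_determined D"
  unfolding finitely_determined_def
proof
  fix t
  show "\<exists>p. \<forall>z z'. restr z p = restr z' p \<longrightarrow> (z \<in> D t \<longleftrightarrow> z' \<in> D t)"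
    by (rule exI[of _ "q t"]) (simp add: D_def cylinder_def)
qed

lemma mass_nonneg: "0 \<le> mass t"
  by (simp add: mass_def)

lemma mass_le_1: "mass t \<le> 1"
proof -
  have "card (E t) \<le> card {e::bool list. length e = q t}"
    using E_subset finite_lists_length by (rule card_mono[rotated])
  then have "real (card (E t)) \<le> 2 ^ q t" by (simp add: card_lists_length of_nat_le_iff[symmetric])
  then show ?thesis by (simp add: mass_def power_one_over field_simps)
qed

lemma sets_mu_offspring: "T \<in> PrTr2 \<Longrightarrow> offspring T D \<in> sets mu"
  by (rule sets_mu_closedin[OF closedin_offspring[OF _ finitely_determined_D]])

lemma rel_measure_piece:
  assumes t: "t \<in> T" and a: "a \<in> Fl (length t)"
  shows "rel_measure (offspring T D) (stretch_list t @ a) = mass t"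
proof -
  let ?u = "stretch_list t @ a"
  let ?C = "cylinder (length ?u + q t) ((@) ?u ` E t)"
  have eq: "offspring T D \<inter> Nbhd ?u = ?C"
    using offspring_Int_Nbhd_piece[OF t a] cat_image_cylinder[OF E_subset] by (simp add: D_def)
  then have "?C \<inter> Nbhd ?u = ?C" by blast
  then have "rel_measure (offspring T D) ?u = rel_measure ?C ?u"
    unfolding rel_measure_def eq by simp
  also have "\<dots> = mass t" unfolding mass_def by (rule rel_measure_cylinder[OF E_subset])
  finally show ?thesis .
qed

lemma rel_measure_nonconst:
  assumes T: "T \<in> PrTr2" and t: "t \<in> T"
  shows "nonconst b \<Longrightarrow> length b \<le> Suc (length t) \<Longrightarrow> rel_measure (offspring T D) (stretch_list t @ b) = mass t"
proof (induction "Suc (length t) - length b" arbitrary: b)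
  case 0
  then have "b \<in> Fl (length t)" by (simp add: Fl_iff_nonconst)
  then show ?case by (rule rel_measure_piece[OF t])
next
  case (Suc d)
  have "rel_measure (offspring T D) (stretch_list t @ b @ [x]) = mass t" for x
    using Suc by (intro Suc.hyps(1)) (simp_all add: nonconst_snoc)
  then show ?case
    using rel_measure_split[OF sets_mu_offspring[OF T], of "stretch_list t @ b"] by simp
qed

lemma rel_measure_constant_run:
  assumes T: "T \<in> PrTr2" and t: "t \<in> T"
  shows "1 \<le> k \<Longrightarrow> k \<le> Suc (length t) \<Longrightarrow>
    rel_measure (offspring T D) (stretch_list t @ replicate k b) =
      (1 - (1/2) ^ (Suc (length t) - k)) * mass t +
      (1/2) ^ (Suc (length t) - k) * rel_measure (offspring T D) (stretch_list (t @ [b]))"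
proof (induction "Suc (length t) - k" arbitrary: k)
  case 0
  then have "k = Suc (length t)" by simp
  then show ?case by (simp add: stretch_list_snoc)
next
  case (Suc d)
  let ?G = "offspring T D"
  let ?p = "rel_measure ?G (stretch_list (t @ [b]))"
  have k: "1 \<le> k" "k \<le> length t" using Suc by auto
  have d: "Suc (length t) - Suc k = d" using Suc.hyps(2) by simp
  have "rel_measure ?G (stretch_list t @ replicate (Suc k) b) = (1 - (1/2) ^ d) * mass t + (1/2) ^ d * ?p"
    using Suc.hyps(1)[of "Suc k"] k unfolding d by simp
  moreover have "replicate k b @ [b] = replicate (Suc k) b" by (simp add: replicate_append_same)
  ultimately have "rel_measure ?G (stretch_list t @ replicate k b @ [b]) = (1 - (1/2) ^ d) * mass t + (1/2) ^ d * ?p"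
    by (simp only:)
  moreover have "rel_measure ?G (stretch_list t @ replicate k b @ [\<not> b]) = mass t"
    using k by (intro rel_measure_nonconst[OF T t] nonconst_replicate_snoc) simp_all
  moreover have "rel_measure ?G (stretch_list t @ replicate k b) =
      (rel_measure ?G (stretch_list t @ replicate k b @ [b]) + rel_measure ?G (stretch_list t @ replicate k b @ [\<not> b])) / 2"
    using rel_measure_split[OF sets_mu_offspring[OF T], of "stretch_list t @ replicate k b"] by (cases b) simp_all
  ultimately have "rel_measure ?G (stretch_list t @ replicate k b) = ((1 - (1/2) ^ d) * mass t + (1/2) ^ d * ?p + mass t) / 2"
    by simp
  moreover have "Suc (length t) - k = Suc d" using Suc.hyps(2) by simp
  ultimately show ?case by (simp add: field_simps)
qed

lemma rel_measure_block_start: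
  assumes T: "T \<in> PrTr2" and t: "t \<in> T"
  shows "\<bar>rel_measure (offspring T D) (stretch_list t) - mass t\<bar> \<le> (1/2) ^ length t"
proof -
  let ?G = "offspring T D"
  let ?h = "(1/2::real) ^ length t"
  let ?avg = "(rel_measure ?G (stretch_list (t @ [False])) + rel_measure ?G (stretch_list (t @ [True]))) / 2"
  have one: "rel_measure ?G (stretch_list t @ [b]) = (1 - ?h) * mass t + ?h * rel_measure ?G (stretch_list (t @ [b]))" for b
    using rel_measure_constant_run[OF T t, of 1 b] by simp
  have "rel_measure ?G (stretch_list t) = (rel_measure ?G (stretch_list t @ [False]) + rel_measure ?G (stretch_list t @ [True])) / 2"
    by (rule rel_measure_split[OF sets_mu_offspring[OF T]])
  then have "rel_measure ?G (stretch_list t) - mass t = ?h * (?avg - mass t)"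
    using one[of False] one[of True] by (simp add: algebra_simps)
  moreover have "\<bar>?avg - mass t\<bar> \<le> 1"
  proof -
    have "0 \<le> ?avg" "?avg \<le> 1"
      using rel_measure_nonneg[of ?G "stretch_list (t @ [False])"] rel_measure_le_1[of ?G "stretch_list (t @ [False])"]
        rel_measure_nonneg[of ?G "stretch_list (t @ [True])"] rel_measure_le_1[of ?G "stretch_list (t @ [True])"]
      by simp_all
    then show ?thesis using mass_nonneg[of t] mass_le_1[of t] by (simp only: abs_le_iff) linarith
  qed
  ultimately show ?thesis by (simp add: abs_mult mult_left_le)
qed

lemma ratio_within_block:
  assumes T: "T \<in> PrTr2" and x: "x \<in> branches T" and k: "k \<le> n"
  shows "\<bar>ratio (offspring T D) (stretch x) (tri n + k) - c\<bar> \<le>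
    \<bar>mass (restr x n) - c\<bar> + \<bar>mass (restr x (Suc n)) - c\<bar> + (1/2) ^ n"
proof -
  let ?G = "offspring T D"
  let ?t = "restr x n"
  have t: "?t \<in> T" "restr x (Suc n) \<in> T" using x by (simp_all add: restr_in_branches)
  have r: "ratio ?G (stretch x) (tri n + k) = rel_measure ?G (stretch_list ?t @ replicate k (x n))"
    using ratio_eq_rel_measure[OF sets_mu_offspring[OF T]] restr_stretch_block[of k n x] k by simp
  have "\<bar>rel_measure ?G (stretch_list (restr x (Suc n))) - mass (restr x (Suc n))\<bar> \<le> (1/2) ^ Suc n"
    using rel_measure_block_start[OF T t(2)] by simp
  also have "(1/2::real) ^ Suc n \<le> (1/2) ^ n" by (simp add: power_decreasing)
  finally have next_start: "\<bar>rel_measure ?G (stretch_list (restr x (Suc n))) - mass (restr x (Suc n))\<bar> \<le> (1/2) ^ n" .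
  show ?thesis
  proof (cases "k = 0")
    case True
    have "\<bar>rel_measure ?G (stretch_list ?t) - mass ?t\<bar> \<le> (1/2) ^ n" using rel_measure_block_start[OF T t(1)] by simp
    then show ?thesis using r True by (simp add: abs_le_iff; linarith)
  next
    case False
    let ?h = "(1/2::real) ^ (Suc n - k)"
    have "rel_measure ?G (stretch_list ?t @ replicate k (x n)) =
        (1 - ?h) * mass ?t + ?h * rel_measure ?G (stretch_list (restr x (Suc n)))"
      using rel_measure_constant_run[OF T t(1), of k "x n"] False k by (simp add: restr_Suc)
    moreover have "\<bar>(1 - ?h) * mass ?t + ?h * rel_measure ?G (stretch_list (restr x (Suc n))) - c\<bar> \<le>
        \<bar>mass ?t - c\<bar> + \<bar>rel_measure ?G (stretch_list (restr x (Suc n))) - c\<bar>"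
      by (rule abs_convex_comb_diff_le) (simp_all add: power_le_one)
    ultimately show ?thesis using r next_start by (simp add: abs_le_iff; linarith)
  qed
qed

lemma ratio_tendsto:
  assumes T: "T \<in> PrTr2" and x: "x \<in> branches T" and lim: "(\<lambda>n. mass (restr x n)) \<longlonglongrightarrow> c"
  shows "ratio (offspring T D) (stretch x) \<longlonglongrightarrow> c"
proof (rule LIMSEQ_I)
  fix r :: real assume "0 < r"
  then have r3: "0 < r / 3" by simp
  from LIMSEQ_D[OF lim r3] obtain n1 where n1: "\<forall>n\<ge>n1. norm (mass (restr x n) - c) < r / 3" by blast
  from half_power_eventually_less[OF r3] obtain n2 where n2: "\<forall>n\<ge>n2. (1/2::real) ^ n < r / 3" by blast
  have "norm (ratio (offspring T D) (stretch x) N - c) < r" if N: "tri (max n1 n2) \<le> N" for N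
  proof -
    obtain n k where nk: "N = tri n + k" "k \<le> n" using tri_decomp by blast
    then have "max n1 n2 \<le> n" using N tri_decomp_ge by blast
    then have "\<bar>mass (restr x n) - c\<bar> < r / 3" "\<bar>mass (restr x (Suc n)) - c\<bar> < r / 3" "(1/2::real) ^ n < r / 3"
      using n1 n2 by auto
    then show ?thesis using ratio_within_block[OF T x nk(2), of c] nk(1) by simp
  qed
  then show "\<exists>no. \<forall>N\<ge>no. norm (ratio (offspring T D) (stretch x) N - c) < r" by blast
qed

lemma ratio_not_convergent:
  assumes T: "T \<in> PrTr2" and x: "x \<in> branches T" and "0 < \<delta>"
    and osc: "\<And>n0. \<exists>n\<ge>n0. \<delta> \<le> \<bar>mass (restr x n) - mass (restr x (Suc n))\<bar>"
  shows "\<not> convergent (ratio (offspring T D) (stretch x))"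
proof
  let ?X = "ratio (offspring T D) (stretch x)"
  assume "convergent ?X"
  then obtain L where L: "?X \<longlonglongrightarrow> L" by (auto simp: convergent_def)
  have d4: "0 < \<delta> / 4" using \<open>0 < \<delta>\<close> by simp
  from LIMSEQ_D[OF L d4] obtain N0 where N0: "\<forall>N\<ge>N0. norm (?X N - L) < \<delta> / 4" by blast
  from half_power_eventually_less[OF d4] obtain n2 where n2: "\<forall>n\<ge>n2. (1/2::real) ^ n < \<delta> / 4" by blast
  obtain n where n: "max N0 n2 \<le> n" "\<delta> \<le> \<bar>mass (restr x n) - mass (restr x (Suc n))\<bar>" using osc by blast
  have "N0 \<le> tri n" "N0 \<le> tri (Suc n)" using n(1) tri_ge[of n] tri_ge[of "Suc n"] by linarith+
  then have "\<bar>?X (tri n) - L\<bar> < \<delta> / 4" "\<bar>?X (tri (Suc n)) - L\<bar> < \<delta> / 4"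
    using N0 by (simp_all del: tri.simps)
  moreover have block_start: "\<bar>?X (tri m) - mass (restr x m)\<bar> \<le> (1/2) ^ n" if "n \<le> m" for m
  proof -
    have "\<bar>?X (tri m) - mass (restr x m)\<bar> \<le> (1/2) ^ m"
      using ratio_eq_rel_measure[OF sets_mu_offspring[OF T]] restr_stretch_tri[of x m]
        rel_measure_block_start[OF T restr_in_branches[OF x]] by simp
    also have "\<dots> \<le> (1/2) ^ n" using that by (simp add: power_decreasing)
    finally show ?thesis .
  qed
  moreover have "(1/2::real) ^ n < \<delta> / 4" using n2 n(1) by simp
  ultimately show False using n(2) block_start[of n] block_start[of "Suc n"]
    by (simp add: abs_le_iff abs_less_iff del: tri.simps; linarith)
qed

end

subsection \<open>Approximating a continuous function on a grid\<close>

definition ones :: "bool list \<Rightarrow> nat" where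
  "ones t = length (filter id t)"

definition grid :: "bool list \<Rightarrow> nat" where
  "grid t = 2 ^ (ones t + 2)"

definition grid_depth :: "bool list \<Rightarrow> nat" where
  "grid_depth t = ones t + 4"

text \<open>The point t 1 1 1 ... lies in Ncal, so c is defined there.\<close>

definition probe :: "(cantor \<Rightarrow> real) \<Rightarrow> bool list \<Rightarrow> real" where
  "probe c t = c (cat t (\<lambda>_. True))"

definition grid_index :: "(cantor \<Rightarrow> real) \<Rightarrow> bool list \<Rightarrow> nat" where
  "grid_index c t = min (grid t - 1) (nat \<lfloor>probe c t * real (grid t)\<rfloor>)"

text \<open>The offsets 1 and 3 (out of 4) alternate with the length of t; they make consecutive
  masses differ by at least half a grid step whenever the grid stops refining.\<close>

definition grid_count :: "(cantor \<Rightarrow> real) \<Rightarrow> bool list \<Rightarrow> nat" where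
  "grid_count c t = 4 * grid_index c t + (if even (length t) then 1 else 3)"

definition grid_mass :: "(cantor \<Rightarrow> real) \<Rightarrow> bool list \<Rightarrow> real" where
  "grid_mass c t = real (grid_count c t) / real (4 * grid t)"

definition grid_set :: "(cantor \<Rightarrow> real) \<Rightarrow> bool list \<Rightarrow> bool list set" where
  "grid_set c t = (SOME E. E \<subseteq> {e. length e = grid_depth t} \<and> card E = grid_count c t)"

lemma grid_ge_4: "4 \<le> grid t"
proof -
  have "(2::nat) ^ 2 \<le> 2 ^ (ones t + 2)" by (rule power_increasing) simp_all
  then show ?thesis by (simp add: grid_def)
qed

lemma two_power_grid_depth: "(2::nat) ^ grid_depth t = 4 * grid t"
  by (simp add: grid_depth_def grid_def power_add)

lemma grid_count_pos: "0 < grid_count c t"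
  by (simp add: grid_count_def)

lemma grid_count_less: "grid_count c t < 2 ^ grid_depth t"
proof -
  have "grid_index c t \<le> grid t - 1" by (simp add: grid_index_def)
  then have "grid_count c t \<le> 4 * (grid t - 1) + 3" by (simp add: grid_count_def)
  also have "\<dots> < 4 * grid t" using grid_ge_4[of t] by simp
  finally show ?thesis by (simp add: two_power_grid_depth)
qed

lemma grid_set: "grid_set c t \<subseteq> {e. length e = grid_depth t}" "card (grid_set c t) = grid_count c t"
proof -
  have "grid_count c t \<le> card {e::bool list. length e = grid_depth t}"
    using grid_count_less[of c t] by (simp add: card_lists_length)
  then obtain E where "E \<subseteq> {e::bool list. length e = grid_depth t}" "card E = grid_count c t"
    by (rule obtain_subset_with_card_n)
  then have "\<exists>E. E \<subseteq> {e::bool list. length e = grid_depth t} \<and> card E = grid_count c t" by blast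
  then have "grid_set c t \<subseteq> {e. length e = grid_depth t} \<and> card (grid_set c t) = grid_count c t"
    unfolding grid_set_def by (rule someI_ex)
  then show "grid_set c t \<subseteq> {e. length e = grid_depth t}" "card (grid_set c t) = grid_count c t"
    by simp_all
qed

interpretation grid: clopen_family grid_depth "grid_set c" for c
  by unfold_locales (rule grid_set(1))

lemma grid_mass_eq: "grid.mass c t = grid_mass c t"
proof -
  have "grid.mass c t = real (grid_count c t) / real ((2::nat) ^ grid_depth t)"
    by (simp add: grid.mass_def grid_set(2) power_one_over)
  then show ?thesis unfolding two_power_grid_depth grid_mass_def .
qed

lemma compliant_grid: "compliant T (grid.D c)"
proof -
  have "grid.D c t \<noteq> {}" for t
  proof -
    obtain e where e: "e \<in> grid_set c t"
      using grid_count_pos[of c t] grid_set(2)[of c t] by (metis card.empty ex_in_conv less_irrefl)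
    moreover have "length e = grid_depth t" using e grid_set(1)[of c t] by auto
    ultimately have "cat e (\<lambda>_. False) \<in> grid.D c t"
      using restr_cat_length[of e] by (simp add: grid.D_def cylinder_def)
    then show ?thesis by blast
  qed
  moreover have "grid.D c t \<noteq> UNIV" for t
  proof -
    have "\<not> {e::bool list. length e = grid_depth t} \<subseteq> grid_set c t"
    proof
      assume "{e::bool list. length e = grid_depth t} \<subseteq> grid_set c t"
      then have "card {e::bool list. length e = grid_depth t} \<le> card (grid_set c t)"
        using grid_set(1)[of c t] finite_lists_length by (intro card_mono) (auto intro: finite_subset)
      then show False using grid_set(2)[of c t] grid_count_less[of c t] by (simp add: card_lists_length)
    qed
    then obtain e where e: "length e = grid_depth t" "e \<notin> grid_set c t" by blast
    then have "cat e (\<lambda>_. False) \<notin> grid.D c t"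
      using restr_cat_length[of e] by (simp add: grid.D_def cylinder_def)
    then show ?thesis by blast
  qed
  moreover have "cantor_top interior_of grid.D c t = grid.D c t" "cantor_top closure_of grid.D c t = grid.D c t" for t
    by (simp_all add: grid.D_def interior_of_openin[OF openin_cylinder] closure_of_closedin[OF closedin_cylinder])
  ultimately show ?thesis
    by (simp add: compliant_def grid.D_def dualistic_cylinder)
qed
lemma grid_index_bounds:
  assumes "0 \<le> probe c t" "probe c t \<le> 1"
  shows "real (grid_index c t) \<le> probe c t * grid t" "probe c t * grid t \<le> real (grid_index c t) + 1"
proof -
  let ?v = "probe c t * grid t"
  have v: "0 \<le> ?v" "?v \<le> grid t" using assms by (simp_all add: mult_left_le_one_le)
  then have floor: "real (nat \<lfloor>?v\<rfloor>) = of_int \<lfloor>?v\<rfloor>" by simp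
  have "grid_index c t \<le> nat \<lfloor>?v\<rfloor>" by (simp add: grid_index_def)
  then show "real (grid_index c t) \<le> ?v" using floor by linarith
  show "?v \<le> real (grid_index c t) + 1"
  proof (cases "nat \<lfloor>?v\<rfloor> \<le> grid t - 1")
    case True
    then have "grid_index c t = nat \<lfloor>?v\<rfloor>" by (simp add: grid_index_def)
    then show ?thesis using floor by linarith
  next
    case False
    then have "grid_index c t = grid t - 1" by (simp add: grid_index_def)
    then have "real (grid_index c t) + 1 = grid t" using grid_ge_4[of t] by (simp add: of_nat_diff)
    then show ?thesis using v by simp
  qed
qed

lemma grid_mass_approx:
  assumes "0 \<le> probe c t" "probe c t \<le> 1"
  shows "\<bar>grid_mass c t - probe c t\<bar> \<le> 1 / real (grid t)"
proof -
  have K: "0 < real (grid t)" using grid_ge_4[of t] by simp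
  define r where "r = (if even (length t) then 1 else 3 :: nat)"
  have "grid_mass c t * grid t = real (grid_index c t) + real r / 4"
    using K by (simp add: grid_mass_def grid_count_def r_def field_simps)
  moreover have "1 \<le> r" "r \<le> 3" by (simp_all add: r_def)
  ultimately have "\<bar>grid_mass c t * grid t - probe c t * grid t\<bar> \<le> 1"
    using grid_index_bounds[OF assms] by (simp add: abs_le_iff; linarith)
  moreover have "grid_mass c t * grid t - probe c t * grid t = (grid_mass c t - probe c t) * grid t"
    by (simp add: algebra_simps)
  ultimately have "\<bar>grid_mass c t - probe c t\<bar> * grid t \<le> 1" by (simp add: abs_mult)
  then show ?thesis using K by (simp add: field_simps)
qed

lemma grid_mass_parity:
  assumes K: "grid t' = grid t" and l: "length t' = Suc (length t)"
  shows "1 / (2 * real (grid t)) \<le> \<bar>grid_mass c t - grid_mass c t'\<bar>"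
proof -
  let ?Kr = "real (grid t)"
  have Kpos: "0 < ?Kr" using grid_ge_4[of t] by simp
  define j where "j = int (grid_index c t) - int (grid_index c t')"
  have z: "2 \<le> \<bar>int (grid_count c t) - int (grid_count c t')\<bar>"
  proof (cases "even (length t)")
    case True
    then have "int (grid_count c t) - int (grid_count c t') = 4 * j - 2" using l by (simp add: grid_count_def j_def)
    then show ?thesis by presburger
  next
    case False
    then have "int (grid_count c t) - int (grid_count c t') = 4 * j + 2" using l by (simp add: grid_count_def j_def)
    then show ?thesis by presburger
  qed
  have "(grid_mass c t - grid_mass c t') * (4 * ?Kr) = real (grid_count c t) - real (grid_count c t')"
    using Kpos K by (simp add: grid_mass_def field_simps)
  also have "\<bar>\<dots>\<bar> = real_of_int \<bar>int (grid_count c t) - int (grid_count c t')\<bar>" by simp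
  finally have "2 \<le> \<bar>grid_mass c t - grid_mass c t'\<bar> * (4 * ?Kr)"
    using z by (simp add: abs_mult)
  then show ?thesis using Kpos by (simp add: field_simps)
qed

lemma ones_restr: "ones (restr x n) = card {i. i < n \<and> x i}"
proof -
  have "ones (restr x n) = card {i. i < length (restr x n) \<and> id (restr x n ! i)}"
    unfolding ones_def by (rule length_filter_conv_card)
  also have "{i. i < length (restr x n) \<and> id (restr x n ! i)} = {i. i < n \<and> x i}" by auto
  finally show ?thesis .
qed

lemma ones_eventually_ge:
  assumes x: "x \<in> Ncal"
  shows "\<exists>n0. \<forall>n\<ge>n0. B \<le> ones (restr x n)"
proof -
  have inf: "infinite {i. x i}" using x by (simp add: Ncal_def)
  obtain S where S: "S \<subseteq> {i. x i}" "finite S" "card S = B"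
    using infinite_arbitrarily_large[OF inf] by blast
  obtain n0 where n0: "S \<subseteq> {..<n0}" using finite_nat_bounded[OF S(2)] by blast
  have "B \<le> ones (restr x n)" if n: "n0 \<le> n" for n
  proof -
    have "S \<subseteq> {i. i < n \<and> x i}" using S(1) n0 n by auto
    then have "card S \<le> card {i. i < n \<and> x i}" by (rule card_mono[rotated]) simp
    then show ?thesis using S(3) by (simp add: ones_restr)
  qed
  then show ?thesis by blast
qed

lemma ones_eventually_const:
  assumes x: "x \<notin> Ncal"
  shows "\<exists>n1. \<forall>n\<ge>n1. ones (restr x n) = card {i. x i}"
proof -
  have fin: "finite {i. x i}" using x by (simp add: Ncal_def)
  obtain n1 where n1: "{i. x i} \<subseteq> {..<n1}" using finite_nat_bounded[OF fin] by blast
  have "ones (restr x n) = card {i. x i}" if n: "n1 \<le> n" for n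
  proof -
    have "{i. i < n \<and> x i} = {i. x i}" using n1 n by auto
    then show ?thesis by (simp add: ones_restr)
  qed
  then show ?thesis by blast
qed

lemma cat_True_in_Ncal: "cat u (\<lambda>_. True) \<in> Ncal"
proof -
  have sub: "{length u..} \<subseteq> {i. cat u (\<lambda>_. True) i}" by (auto simp: cat_def)
  have "infinite {length u..}" by (rule infinite_Ici)
  then have "infinite {i. cat u (\<lambda>_. True) i}" by (rule infinite_super[OF sub])
  then show ?thesis unfolding Ncal_def by simp
qed

lemma probe_tendsto:
  assumes cont: "continuous_map (subtopology cantor_top Ncal) euclideanreal c" and x: "x \<in> Ncal"
  shows "(\<lambda>n. probe c (restr x n)) \<longlonglongrightarrow> c x"
proof (rule LIMSEQ_I)
  fix r :: real assume r: "0 < r"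
  let ?V = "{v. \<bar>v - c x\<bar> < r}"
  have "open ?V" using open_ball[of "c x" r] by (simp add: ball_def dist_real_def abs_minus_commute)
  then have "openin euclideanreal ?V" by simp
  then have "openin (subtopology cantor_top Ncal) {y \<in> topspace (subtopology cantor_top Ncal). c y \<in> ?V}"
    using cont by (rule openin_continuous_map_preimage[rotated])
  then obtain U where U: "openin cantor_top U" "{y \<in> topspace (subtopology cantor_top Ncal). c y \<in> ?V} = U \<inter> Ncal"
    unfolding openin_subtopology by (elim exE conjE) simp
  have U2: "(y \<in> Ncal \<and> \<bar>c y - c x\<bar> < r) \<longleftrightarrow> (y \<in> U \<and> y \<in> Ncal)" for y
    using U(2) unfolding set_eq_iff by simp
  have "x \<in> U" using U2[of x] x r by simp
  then obtain n0 where n0: "Nbhd (restr x n0) \<subseteq> U" using openin_cantor_top_Nbhd[OF U(1)] by blast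
  have "norm (probe c (restr x n) - c x) < r" if n: "n0 \<le> n" for n
  proof -
    let ?y = "cat (restr x n) (\<lambda>_. True)"
    have "restr ?y n0 = take n0 (restr x n)" using n by (intro restr_cat_le) simp
    also have "\<dots> = restr x n0" using n by (rule take_restr)
    finally have "?y \<in> Nbhd (restr x n0)" by (simp add: mem_Nbhd)
    then have "?y \<in> U" using n0 by blast
    then have "\<bar>c ?y - c x\<bar> < r" using U2[of ?y] cat_True_in_Ncal[of "restr x n"] by simp
    then show ?thesis by (simp add: probe_def)
  qed
  then show "\<exists>no. \<forall>n\<ge>no. norm (probe c (restr x n) - c x) < r" by blast
qed

lemma grid_mass_tendsto:
  assumes cont: "continuous_map (subtopology cantor_top Ncal) euclideanreal c"
    and rng: "c ` Ncal \<subseteq> {0..1}" and x: "x \<in> Ncal"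
  shows "(\<lambda>n. grid_mass c (restr x n)) \<longlonglongrightarrow> c x"
proof (rule LIMSEQ_I)
  fix r :: real assume r: "0 < r"
  then have r2: "0 < r / 2" by simp
  from LIMSEQ_D[OF probe_tendsto[OF cont x] r2] obtain n1 where n1: "\<forall>n\<ge>n1. norm (probe c (restr x n) - c x) < r / 2" by blast
  from half_power_eventually_less[OF r2] obtain B where B: "\<forall>n\<ge>B. (1/2::real) ^ n < r / 2" by blast
  obtain n2 where n2: "\<forall>n\<ge>n2. B \<le> ones (restr x n)" using ones_eventually_ge[OF x] by blast
  have "norm (grid_mass c (restr x n) - c x) < r" if n: "max n1 n2 \<le> n" for n
  proof -
    have cyb: "0 \<le> probe c (restr x n)" "probe c (restr x n) \<le> 1"
      using rng cat_True_in_Ncal[of "restr x n"] by (auto simp: probe_def)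
    have a: "\<bar>grid_mass c (restr x n) - probe c (restr x n)\<bar> \<le> 1 / real (grid (restr x n))"
      by (rule grid_mass_approx[OF cyb])
    have "1 / real (grid (restr x n)) = (1/2) ^ (ones (restr x n) + 2)"
      by (simp add: grid_def power_one_over)
    also have "\<dots> \<le> (1/2) ^ ones (restr x n)" by (rule power_decreasing) simp_all
    also have "\<dots> < r / 2" using B n2 n by simp
    finally have "\<bar>grid_mass c (restr x n) - probe c (restr x n)\<bar> < r / 2" using a by linarith
    moreover have "\<bar>probe c (restr x n) - c x\<bar> < r / 2" using n1 n by simp
    ultimately show ?thesis using abs_triangle_ineq[of "grid_mass c (restr x n) - probe c (restr x n)" "probe c (restr x n) - c x"] by simp
  qed
  then show "\<exists>no. \<forall>n\<ge>no. norm (grid_mass c (restr x n) - c x) < r" by blast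
qed

lemma grid_mass_oscillates:
  assumes x: "x \<notin> Ncal"
  shows "\<exists>\<delta>>0. \<forall>n0. \<exists>n\<ge>n0. \<delta> \<le> \<bar>grid_mass c (restr x n) - grid_mass c (restr x (Suc n))\<bar>"
proof -
  obtain n1 where n1: "\<forall>n\<ge>n1. ones (restr x n) = card {i. x i}" using ones_eventually_const[OF x] by blast
  let ?K = "(2::nat) ^ (card {i. x i} + 2)"
  have H: "1 / (2 * real ?K) \<le> \<bar>grid_mass c (restr x n) - grid_mass c (restr x (Suc n))\<bar>" if n: "n1 \<le> n" for n
  proof -
    have k1: "grid (restr x n) = ?K" using n1 n by (simp add: grid_def)
    have k2: "grid (restr x (Suc n)) = ?K" using n1 n by (simp add: grid_def del: restr_Suc)
    show ?thesis using grid_mass_parity[of "restr x (Suc n)" "restr x n" c] k1 k2 by simp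
  qed
  have "0 < 1 / (2 * real ?K)" by simp
  moreover have "\<exists>n\<ge>n0. 1 / (2 * real ?K) \<le> \<bar>grid_mass c (restr x n) - grid_mass c (restr x (Suc n))\<bar>" for n0
    using H[of "max n0 n1"] by (intro exI[of _ "max n0 n1"]) simp
  ultimately show ?thesis by blast
qed

lemma closed_offspring_grid: "closed_offspring T (grid.D c) = offspring T (grid.D c)"
proof -
  have "cantor_top closure_of grid.D c t = grid.D c t" for t
    by (simp add: grid.D_def closure_of_closedin[OF closedin_cylinder])
  then show ?thesis by (simp add: closed_offspring_eq_offspring)
qed

lemma has_density_grid_offspring:
  assumes "continuous_map (subtopology cantor_top Ncal) euclideanreal c" "c ` Ncal \<subseteq> {0..1}"
    and "T \<in> PrTr2" "x \<in> branches T" "x \<in> Ncal"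
  shows "has_density (offspring T (grid.D c)) (stretch x) (c x)"
  unfolding has_density_def
  using grid.ratio_tendsto[OF assms(3,4)] grid_mass_tendsto[OF assms(1,2,5)] by (simp add: grid_mass_eq)

lemma oscillation_grid_offspring_eq_0_iff:
  assumes c: "continuous_map (subtopology cantor_top Ncal) euclideanreal c" "c ` Ncal \<subseteq> {0..1}"
    and T: "T \<in> PrTr2" and x: "x \<in> branches T"
  shows "oscillation (offspring T (grid.D c)) (stretch x) = 0 \<longleftrightarrow> x \<in> Ncal"
proof -
  let ?X = "ratio (offspring T (grid.D c)) (stretch x)"
  have "0 \<le> ?X n" "?X n \<le> 1" for n
    using ratio_eq_rel_measure[OF grid.sets_mu_offspring[OF T]] rel_measure_nonneg rel_measure_le_1 by simp_all
  then have "oscillation (offspring T (grid.D c)) (stretch x) = 0 \<longleftrightarrow> convergent ?X"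
    unfolding oscillation_def by (rule limsup_minus_liminf_eq_0_iff)
  also have "\<dots> \<longleftrightarrow> x \<in> Ncal"
  proof
    assume "convergent ?X"
    show "x \<in> Ncal"
    proof (rule ccontr)
      assume "x \<notin> Ncal"
      then obtain \<delta> where "0 < \<delta>" "\<And>n0. \<exists>n\<ge>n0. \<delta> \<le> \<bar>grid_mass c (restr x n) - grid_mass c (restr x (Suc n))\<bar>"
        using grid_mass_oscillates by blast
      then have "\<not> convergent ?X" using grid.ratio_not_convergent[OF T x] by (simp add: grid_mass_eq)
      with \<open>convergent ?X\<close> show False by contradiction
    qed
  next
    assume "x \<in> Ncal"
    then show "convergent ?X"
      using has_density_grid_offspring[OF c T x] by (auto simp: has_density_def convergent_def)
  qed
  finally show ?thesis .
qed

theorem theorem4p1: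
  fixes c :: "cantor \<Rightarrow> real"
  assumes "continuous_map (subtopology cantor_top Ncal) euclideanreal c"
    and "c ` Ncal \<subseteq> {0..1}"
  shows "\<exists>F :: bool list set \<Rightarrow> cantor set.
           continuous_map (subtopology tree_top PrTr2) vietoris F \<and>
           (\<forall>T\<in>PrTr2.
              (\<exists>D. compliant T D \<and> F T = closed_offspring T D) \<and>
              (\<forall>x\<in>branches T. x \<in> Ncal \<longleftrightarrow> oscillation (F T) (stretch x) = 0) \<and>
              (\<forall>x\<in>branches T \<inter> Ncal. has_density (F T) (stretch x) (c x)))"
proof (intro exI[of _ "\<lambda>T. closed_offspring T (grid.D c)"] conjI ballI)
  show "continuous_map (subtopology tree_top PrTr2) vietoris (\<lambda>T. closed_offspring T (grid.D c))"
    unfolding closed_offspring_grid by (rule continuous_map_offspring[OF grid.finitely_determined_D])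
  show "\<exists>D. compliant T D \<and> closed_offspring T (grid.D c) = closed_offspring T D" for T
    using compliant_grid by blast
  show "x \<in> Ncal \<longleftrightarrow> oscillation (closed_offspring T (grid.D c)) (stretch x) = 0"
    if "T \<in> PrTr2" "x \<in> branches T" for T x
    using oscillation_grid_offspring_eq_0_iff[OF assms that] by (simp add: closed_offspring_grid)
  show "has_density (closed_offspring T (grid.D c)) (stretch x) (c x)"
    if "T \<in> PrTr2" "x \<in> branches T \<inter> Ncal" for T x
    using has_density_grid_offspring[OF assms] that by (simp add: closed_offspring_grid)
qed

end
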